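(* Let $G,n,T,W$ be as in the context. Then: (1) $W$ is a discrete gradient vector field on $\mathcal D^nG$; (2) $W$ is $\mathcal S_n$-equivariant ($(b,a)\in W$ implies $(b\cdot\sigma,a\cdot\sigma)\in W$ for all $\sigma\in\mathcal S_n$), so it induces a discrete vector field on the quotient $U\mathcal D^nG=\mathcal D^nG/\mathcal S_n$, and if this induced field has $m_k$ critical cells of dimension $k$, then $\mathcal D^nG$ has exactly $n!\,m_k$ critical cells of dimension $k$ with respect to $W$.
   Context: Let $G$ be a finite graph regarded as a 1-dimensional cell complex and $n\ge1$; assume $G$ is $n$-sufficiently subdivided, i.e. every path between distinct vertices of degree $\neq2$ passes through at least $n-1$ edges and every cycle passes through at least $n+1$ edges. The discretized configuration space $\mathcal D^nG$ is the subcomplex of the product cell complex $G^n$ consisting of the cells $a=(a_1,\dots,a_n)$ (each $a_i$ a vertex or an open edge of $G$) whose closures are pairwise disjoint; $\mathcal S_n$ acts on it by permuting coordinates, $(a_1,\dots,a_n)\cdot\sigma=(a_{\sigma(1)},\dots,a_{\sigma(n)})$. Fix a maximal tree $T$ of $G$ and a root vertex $0$ of $T$ of degree one. For vertices $u,v$, let $u\wedge v$ be the vertex $w$ such that the intersection of the $T$-paths from $0$ to $u$ and from $0$ to $v$ is the $T$-path from $0$ to $w$. For each vertex $v\ne0$ number the edges of $G$ incident to $v$ by $0,1,\dots,d(v)-1$, giving number $0$ to the edge lying on the $T$-path from $v$ to $0$; the unique edge at $0$ gets number $1$. For vertices $v\neq w$ let $g(v,w)$ be the number of the edge at $v$ lying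 on the $T$-path from $v$ to $w$. Totally order the vertices: for $u\ne v$ with $w=u\wedge v$, $u<v$ iff either $u=w$, or $u\neq w$ and $g(w,u)<g(w,v)$. For a vertex $v\ne0$, $e(v)$ denotes the edge of $T$ incident to $v$ lying on the $T$-path from $v$ to $0$. For a cell $a$ and a vertex coordinate $a_i$: $a_i$ is blocked in $a$ if $a_i=0$ or the closure of $e(a_i)$ meets the closure of some $a_j$, $j\ne i$; otherwise $a_i$ is unblocked and $\mathrm{er}_i(a)$ is obtained by replacing $a_i$ with $e(a_i)$. If $a_i$ is the smallest unblocked vertex coordinate of $a$, $\mathrm{pr}(a)=\mathrm{er}_i(a)$. Define $W_0=\{(a,\mathrm{pr}(a)) : a$ a $0$-cell with $\mathrm{pr}(a)$ defined$\}$, $W_{k+1}=\{(a,\mathrm{pr}(a)) : a$ a $(k+1)$-cell with $\mathrm{pr}(a)$ defined, not the second entry of a pair in $W_k\}$, $W=\bigcup_kW_k$. A discrete vector field $V$ on a regular cell complex is a set of pairs $(\tau,\nu)$ with $\tau$ an immediate face of $\nu$ such that each cell is an entry of at most one pair; a cell is critical if it is an entry of no pair. A $V$-path is a sequence of $k$-cells $\tau_1,\dots,\tau_r$ with $\tau_i\ne\tau_{i+1}$, each $\tau_i$ ($i<r$) the first entry of a pair $(\tau_i,V(\tau_i))\in V$ and $\tau_{i+1}$ a face of $V(\tau_i)$; it is closed if $\tau_1=\tau_r$; $V$ is a gradient vector field if there are no closed $V$-paths (of length $\geq 2$ with $\tau_1=\tau_r$). *)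

theory Defs
  imports Main "HOL-Combinatorics.Permutations"
begin

definition is_walk :: "'v set \<Rightarrow> ('e \<Rightarrow> 'v set) \<Rightarrow> 'e set \<Rightarrow> 'v list \<Rightarrow> 'e list \<Rightarrow> bool" where
  "is_walk V inc F vs es \<longleftrightarrow> length vs = Suc (length es) \<and> set vs \<subseteq> V \<and>
     (\<forall>i<length es. es ! i \<in> F \<and> inc (es ! i) = {vs ! i, vs ! Suc i})"

definition is_path :: "'v set \<Rightarrow> ('e \<Rightarrow> 'v set) \<Rightarrow> 'e set \<Rightarrow> 'v list \<Rightarrow> 'e list \<Rightarrow> bool" where
  "is_path V inc F vs es \<longleftrightarrow> is_walk V inc F vs es \<and> distinct vs"

definition is_cycle :: "'v set \<Rightarrow> ('e \<Rightarrow> 'v set) \<Rightarrow> 'e set \<Rightarrow> 'v list \<Rightarrow> 'e list \<Rightarrow> bool" where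
  "is_cycle V inc F vs es \<longleftrightarrow> is_walk V inc F vs es \<and> es \<noteq> [] \<and> distinct es \<and>
     hd vs = last vs \<and> distinct (tl vs)"

definition finite_graph :: "'v set \<Rightarrow> 'e set \<Rightarrow> ('e \<Rightarrow> 'v set) \<Rightarrow> bool" where
  "finite_graph V E inc \<longleftrightarrow> finite V \<and> finite E \<and> (\<forall>e\<in>E. inc e \<subseteq> V \<and> card (inc e) = 2)"

definition deg :: "'e set \<Rightarrow> ('e \<Rightarrow> 'v set) \<Rightarrow> 'v \<Rightarrow> nat" where
  "deg E inc v = card {e \<in> E. v \<in> inc e}"

definition sufficiently_subdivided :: "nat \<Rightarrow> 'v set \<Rightarrow> 'e set \<Rightarrow> ('e \<Rightarrow> 'v set) \<Rightarrow> bool" where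
  "sufficiently_subdivided n V E inc \<longleftrightarrow>
     (\<forall>vs es. is_path V inc E vs es \<and> hd vs \<noteq> last vs \<and> deg E inc (hd vs) \<noteq> 2
         \<and> deg E inc (last vs) \<noteq> 2 \<longrightarrow> length es \<ge> n - 1) \<and>
     (\<forall>vs es. is_cycle V inc E vs es \<longrightarrow> length es \<ge> n + 1)"

text \<open>Maximal (= spanning, the graph being connected) tree T: any two vertices
  are joined by a unique simple path in T.\<close>
definition spanning_tree :: "'v set \<Rightarrow> 'e set \<Rightarrow> ('e \<Rightarrow> 'v set) \<Rightarrow> 'e set \<Rightarrow> bool" where
  "spanning_tree V E inc T \<longleftrightarrow> T \<subseteq> E \<and>
     (\<forall>u\<in>V. \<forall>v\<in>V. \<exists>!p. is_path V inc T (fst p) (snd p) \<and> hd (fst p) = u \<and> last (fst p) = v)"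

definition tpath :: "'v set \<Rightarrow> ('e \<Rightarrow> 'v set) \<Rightarrow> 'e set \<Rightarrow> 'v \<Rightarrow> 'v \<Rightarrow> 'v list \<times> 'e list" where
  "tpath V inc T u v = (THE p. is_path V inc T (fst p) (snd p) \<and> hd (fst p) = u \<and> last (fst p) = v)"

text \<open>u \<and> v with respect to the root r.\<close>
definition tmeet :: "'v set \<Rightarrow> ('e \<Rightarrow> 'v set) \<Rightarrow> 'e set \<Rightarrow> 'v \<Rightarrow> 'v \<Rightarrow> 'v \<Rightarrow> 'v" where
  "tmeet V inc T r u v = (THE w. w \<in> V \<and>
      set (fst (tpath V inc T r u)) \<inter> set (fst (tpath V inc T r v)) = set (fst (tpath V inc T r w)) \<and>
      set (snd (tpath V inc T r u)) \<inter> set (snd (tpath V inc T r v)) = set (snd (tpath V inc T r w)))"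

definition gnum :: "'v set \<Rightarrow> ('e \<Rightarrow> 'v set) \<Rightarrow> 'e set \<Rightarrow> ('v \<Rightarrow> 'e \<Rightarrow> nat) \<Rightarrow> 'v \<Rightarrow> 'v \<Rightarrow> nat" where
  "gnum V inc T num v w = num v (hd (snd (tpath V inc T v w)))"

text \<open>e(v): the edge of T at v on the T-path from v to the root.\<close>
definition eroot :: "'v set \<Rightarrow> ('e \<Rightarrow> 'v set) \<Rightarrow> 'e set \<Rightarrow> 'v \<Rightarrow> 'v \<Rightarrow> 'e" where
  "eroot V inc T r v = hd (snd (tpath V inc T v r))"

text \<open>The total order on vertices (strict part).\<close>
definition vless :: "'v set \<Rightarrow> ('e \<Rightarrow> 'v set) \<Rightarrow> 'e set \<Rightarrow> 'v \<Rightarrow> ('v \<Rightarrow> 'e \<Rightarrow> nat) \<Rightarrow> 'v \<Rightarrow> 'v \<Rightarrow> bool" where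
  "vless V inc T r num u v \<longleftrightarrow> u \<noteq> v \<and>
     (let w = tmeet V inc T r u v in
        u = w \<or> (u \<noteq> w \<and> v \<noteq> w \<and> gnum V inc T num w u < gnum V inc T num w v))"

definition edge_numbering :: "'v set \<Rightarrow> 'e set \<Rightarrow> ('e \<Rightarrow> 'v set) \<Rightarrow> 'e set \<Rightarrow> 'v \<Rightarrow> ('v \<Rightarrow> 'e \<Rightarrow> nat) \<Rightarrow> bool" where
  "edge_numbering V E inc T r num \<longleftrightarrow>
     (\<forall>v\<in>V. v \<noteq> r \<longrightarrow> bij_betw (num v) {e \<in> E. v \<in> inc e} {0..<deg E inc v}
                     \<and> num v (eroot V inc T r v) = 0) \<and>
     (\<forall>e\<in>T. r \<in> inc e \<longrightarrow> num r e = 1)"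

datatype ('v, 'e) gcell = Vx 'v | Ed 'e

fun gcell_in :: "'v set \<Rightarrow> 'e set \<Rightarrow> ('v, 'e) gcell \<Rightarrow> bool" where
  "gcell_in V E (Vx v) = (v \<in> V)"
| "gcell_in V E (Ed e) = (e \<in> E)"

text \<open>Vertex set of the closure of a cell of G (two closures meet iff these meet).\<close>
fun cverts :: "('e \<Rightarrow> 'v set) \<Rightarrow> ('v, 'e) gcell \<Rightarrow> 'v set" where
  "cverts inc (Vx v) = {v}"
| "cverts inc (Ed e) = inc e"

fun is_Ed :: "('v, 'e) gcell \<Rightarrow> bool" where
  "is_Ed (Vx v) = False"
| "is_Ed (Ed e) = True"

fun the_Vx :: "('v, 'e) gcell \<Rightarrow> 'v" where
  "the_Vx (Vx v) = v"
| "the_Vx (Ed e) = undefined"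

definition DnG :: "nat \<Rightarrow> 'v set \<Rightarrow> 'e set \<Rightarrow> ('e \<Rightarrow> 'v set) \<Rightarrow> ('v, 'e) gcell list set" where
  "DnG n V E inc = {a. length a = n \<and> (\<forall>i<n. gcell_in V E (a ! i)) \<and>
      (\<forall>i<n. \<forall>j<n. i \<noteq> j \<longrightarrow> cverts inc (a ! i) \<inter> cverts inc (a ! j) = {})}"

definition cdim :: "('v, 'e) gcell list \<Rightarrow> nat" where
  "cdim a = length (filter is_Ed a)"

definition imm_face :: "('e \<Rightarrow> 'v set) \<Rightarrow> ('v, 'e) gcell list \<Rightarrow> ('v, 'e) gcell list \<Rightarrow> bool" where
  "imm_face inc a b \<longleftrightarrow> (\<exists>i<length b. \<exists>e v. b ! i = Ed e \<and> v \<in> inc e \<and> a = b[i := Vx v])"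

definition act :: "('v, 'e) gcell list \<Rightarrow> (nat \<Rightarrow> nat) \<Rightarrow> ('v, 'e) gcell list" where
  "act a \<sigma> = map (\<lambda>i. a ! \<sigma> i) [0..<length a]"

definition blocked :: "'v set \<Rightarrow> ('e \<Rightarrow> 'v set) \<Rightarrow> 'e set \<Rightarrow> 'v \<Rightarrow> ('v, 'e) gcell list \<Rightarrow> nat \<Rightarrow> bool" where
  "blocked V inc T r a i \<longleftrightarrow> the_Vx (a ! i) = r \<or>
     (\<exists>j<length a. j \<noteq> i \<and> inc (eroot V inc T r (the_Vx (a ! i))) \<inter> cverts inc (a ! j) \<noteq> {})"

definition unblocked :: "'v set \<Rightarrow> ('e \<Rightarrow> 'v set) \<Rightarrow> 'e set \<Rightarrow> 'v \<Rightarrow> ('v, 'e) gcell list \<Rightarrow> nat \<Rightarrow> bool" where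
  "unblocked V inc T r a i \<longleftrightarrow> i < length a \<and> \<not> is_Ed (a ! i) \<and> \<not> blocked V inc T r a i"

definition er :: "'v set \<Rightarrow> ('e \<Rightarrow> 'v set) \<Rightarrow> 'e set \<Rightarrow> 'v \<Rightarrow> ('v, 'e) gcell list \<Rightarrow> nat \<Rightarrow> ('v, 'e) gcell list" where
  "er V inc T r a i = a[i := Ed (eroot V inc T r (the_Vx (a ! i)))]"

definition pr :: "'v set \<Rightarrow> ('e \<Rightarrow> 'v set) \<Rightarrow> 'e set \<Rightarrow> 'v \<Rightarrow> ('v \<Rightarrow> 'e \<Rightarrow> nat) \<Rightarrow>
    ('v, 'e) gcell list \<Rightarrow> ('v, 'e) gcell list option" where
  "pr V inc T r num a =
     (if \<exists>i. unblocked V inc T r a i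
      then Some (er V inc T r a (THE i. unblocked V inc T r a i \<and>
               (\<forall>j. unblocked V inc T r a j \<and> j \<noteq> i \<longrightarrow>
                    vless V inc T r num (the_Vx (a ! i)) (the_Vx (a ! j)))))
      else None)"

fun Wk :: "nat \<Rightarrow> 'v set \<Rightarrow> 'e set \<Rightarrow> ('e \<Rightarrow> 'v set) \<Rightarrow> 'e set \<Rightarrow> 'v \<Rightarrow> ('v \<Rightarrow> 'e \<Rightarrow> nat) \<Rightarrow> nat \<Rightarrow>
    (('v, 'e) gcell list \<times> ('v, 'e) gcell list) set" where
  "Wk n V E inc T r num 0 =
     {(a, the (pr V inc T r num a)) | a. a \<in> DnG n V E inc \<and> cdim a = 0 \<and> pr V inc T r num a \<noteq> None}"
| "Wk n V E inc T r num (Suc k) =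
     {(a, the (pr V inc T r num a)) | a. a \<in> DnG n V E inc \<and> cdim a = Suc k \<and>
        pr V inc T r num a \<noteq> None \<and> a \<notin> snd ` Wk n V E inc T r num k}"

definition W :: "nat \<Rightarrow> 'v set \<Rightarrow> 'e set \<Rightarrow> ('e \<Rightarrow> 'v set) \<Rightarrow> 'e set \<Rightarrow> 'v \<Rightarrow> ('v \<Rightarrow> 'e \<Rightarrow> nat) \<Rightarrow>
    (('v, 'e) gcell list \<times> ('v, 'e) gcell list) set" where
  "W n V E inc T r num = (\<Union>k. Wk n V E inc T r num k)"

definition discrete_vector_field :: "'c set \<Rightarrow> ('c \<Rightarrow> 'c \<Rightarrow> bool) \<Rightarrow> ('c \<times> 'c) set \<Rightarrow> bool" where
  "discrete_vector_field X face Vf \<longleftrightarrow>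
     (\<forall>(\<tau>, \<nu>) \<in> Vf. \<tau> \<in> X \<and> \<nu> \<in> X \<and> face \<tau> \<nu>) \<and>
     (\<forall>p\<in>Vf. \<forall>q\<in>Vf. p \<noteq> q \<longrightarrow> {fst p, snd p} \<inter> {fst q, snd q} = {})"

definition V_path :: "('c \<Rightarrow> 'c \<Rightarrow> bool) \<Rightarrow> ('c \<times> 'c) set \<Rightarrow> 'c list \<Rightarrow> bool" where
  "V_path face Vf ts \<longleftrightarrow> ts \<noteq> [] \<and>
     (\<forall>i. Suc i < length ts \<longrightarrow> ts ! i \<noteq> ts ! Suc i \<and>
        (\<exists>\<nu>. (ts ! i, \<nu>) \<in> Vf \<and> face (ts ! Suc i) \<nu>))"

definition gradient_vector_field :: "'c set \<Rightarrow> ('c \<Rightarrow> 'c \<Rightarrow> bool) \<Rightarrow> ('c \<times> 'c) set \<Rightarrow> bool" where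
  "gradient_vector_field X face Vf \<longleftrightarrow> discrete_vector_field X face Vf \<and>
     \<not> (\<exists>ts. V_path face Vf ts \<and> length ts \<ge> 2 \<and> hd ts = last ts)"

definition critical :: "('c \<times> 'c) set \<Rightarrow> 'c \<Rightarrow> bool" where
  "critical Vf c \<longleftrightarrow> c \<notin> fst ` Vf \<and> c \<notin> snd ` Vf"

definition orbit :: "nat \<Rightarrow> ('v, 'e) gcell list \<Rightarrow> ('v, 'e) gcell list set" where
  "orbit n a = {act a \<sigma> | \<sigma>. \<sigma> permutes {..<n}}"

definition UDnG :: "nat \<Rightarrow> 'v set \<Rightarrow> 'e set \<Rightarrow> ('e \<Rightarrow> 'v set) \<Rightarrow> ('v, 'e) gcell list set set" where
  "UDnG n V E inc = orbit n ` DnG n V E inc"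

definition qface :: "('e \<Rightarrow> 'v set) \<Rightarrow> ('v, 'e) gcell list set \<Rightarrow> ('v, 'e) gcell list set \<Rightarrow> bool" where
  "qface inc O1 O2 \<longleftrightarrow> (\<exists>\<tau>\<in>O1. \<exists>\<nu>\<in>O2. imm_face inc \<tau> \<nu>)"

definition induced_field :: "nat \<Rightarrow> (('v, 'e) gcell list \<times> ('v, 'e) gcell list) set \<Rightarrow>
    (('v, 'e) gcell list set \<times> ('v, 'e) gcell list set) set" where
  "induced_field n Vf = {(orbit n b, orbit n a) | b a. (b, a) \<in> Vf}"

end

theory Submission
  imports Defs "HOL-Library.List_Lexorder" "HOL-Library.Product_Lexorder"
begin

text \<open>Reading off the edge numbers along the T-path from the root to a vertex gives a sequence
  whose lexicographic order is the given vertex order; so pr moves the unblocked vertex with the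
  lexicographically least sequence onto its root edge. By induction on dimension, W pairs every
  redundant cell (pr is defined on it, but it is not itself a value of pr) with its image under pr,
  and two redundant cells with the same image coincide, so W is a discrete vector field. Along a
  V-path the triple (number of non-tree edges, total height of the cells, sequence of the least
  unblocked vertex) strictly decreases lexicographically, which excludes closed V-paths. Permuting
  coordinates commutes with pr, so W is equivariant and descends to the quotient; as S_n acts
  freely on the cells of D^nG, each critical orbit consists of n! critical cells.\<close>

lemma list_less_prefix:
  fixes xs :: "'a::linorder list"
  assumes "xs = take k ys" "k < length ys"
  shows "xs < ys"
  using assms unfolding list_less_def lexord_take_index_conv by simp

lemma list_less_first_difference:
  fixes xs ys :: "'a::linorder list"
  assumes "take k xs = take k ys" "k < length xs" "k < length ys" "xs ! k \<noteq> ys ! k"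
  shows "xs < ys \<longleftrightarrow> xs ! k < ys ! k"
proof
  assume "xs < ys"
  then consider "length xs < length ys" "take (length xs) ys = xs"
    | i where "i < min (length xs) (length ys)" "take i xs = take i ys" "xs ! i < ys ! i"
    unfolding list_less_def lexord_take_index_conv by auto
  then show "xs ! k < ys ! k"
  proof cases
    case 1
    then show ?thesis using assms by (metis nth_take)
  next
    case (2 i)
    have "i = k"
    proof (rule linorder_cases[of i k])
      assume "i < k"
      then show ?thesis using assms(1) 2(3) by (metis less_irrefl nth_take)
    next
      assume "k < i"
      then show ?thesis using assms(4) 2(2) by (metis nth_take)
    qed
    with 2 show ?thesis by simp
  qed
next
  assume "xs ! k < ys ! k"
  then show "xs < ys" using assms unfolding list_less_def lexord_take_index_conv by auto
qed

lemma length_filter_update: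
  "i < length xs \<Longrightarrow> length (filter P (xs[i := x])) + (if P (xs ! i) then 1 else 0) =
     length (filter P xs) + (if P x then 1 else 0)"
proof (induction xs arbitrary: i)
  case (Cons y ys)
  then show ?case by (cases i) auto
qed simp

lemma sum_list_map_update:
  "i < length xs \<Longrightarrow> sum_list (map h (xs[i := x])) + h (xs ! i) = sum_list (map h xs) + (h x :: nat)"
proof (induction xs arbitrary: i)
  case (Cons y ys)
  then show ?case by (cases i) auto
qed simp

lemma descending_list_not_closed:
  fixes f :: "'a \<Rightarrow> 'b::order"
  assumes desc: "\<And>k. Suc k < length xs \<Longrightarrow> f (xs ! Suc k) < f (xs ! k)" and len: "length xs \<ge> 2"
  shows "hd xs \<noteq> last xs"
proof -
  have "f (xs ! Suc k) < f (xs ! 0)" if "Suc k < length xs" for k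
    using that
  proof (induction k)
    case (Suc k)
    then show ?case using desc[of "Suc k"] by (auto intro: order.strict_trans)
  qed (use desc[of 0] in simp)
  moreover have "Suc (length xs - 2) = length xs - 1" "Suc (length xs - 2) < length xs" using len by auto
  ultimately have "f (xs ! (length xs - 1)) < f (xs ! 0)" by metis
  moreover have "xs \<noteq> []" using len by auto
  ultimately have "f (last xs) < f (hd xs)" by (simp add: last_conv_nth hd_conv_nth)
  then show ?thesis by auto
qed

lemma is_walk_take:
  assumes "is_walk V inc F vs es" "k \<le> length es"
  shows "is_walk V inc F (take (Suc k) vs) (take k es)"
  using assms unfolding is_walk_def by (auto simp: min_def dest: in_set_takeD)

lemma is_walk_drop:
  assumes "is_walk V inc F vs es" "k \<le> length es"
  shows "is_walk V inc F (drop k vs) (drop k es)"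
  using assms unfolding is_walk_def by (auto dest: in_set_dropD)

lemma is_walk_snoc:
  assumes "is_walk V inc F vs es" "x \<in> V" "e \<in> F" "inc e = {last vs, x}"
  shows "is_walk V inc F (vs @ [x]) (es @ [e])"
proof -
  have len: "length vs = Suc (length es)" using assms(1) unfolding is_walk_def by simp
  then have "last vs = vs ! length es" by (metis diff_Suc_1 last_conv_nth list.size(3) nat.distinct(1))
  with assms len show ?thesis
    unfolding is_walk_def by (auto simp: nth_append less_Suc_eq)
qed

lemma is_walk_rev:
  assumes "is_walk V inc F vs es"
  shows "is_walk V inc F (rev vs) (rev es)"
proof -
  have len: "length vs = Suc (length es)" using assms unfolding is_walk_def by simp
  have "rev es ! i \<in> F \<and> inc (rev es ! i) = {rev vs ! i, rev vs ! Suc i}" if i: "i < length es" for i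
  proof -
    have "es ! (length es - Suc i) \<in> F \<and>
        inc (es ! (length es - Suc i)) = {vs ! (length es - Suc i), vs ! Suc (length es - Suc i)}"
      using assms i unfolding is_walk_def by simp
    then show ?thesis using i len by (auto simp: rev_nth Suc_diff_Suc insert_commute)
  qed
  then show ?thesis using assms len unfolding is_walk_def by auto
qed

lemma is_path_take: "is_path V inc F vs es \<Longrightarrow> k \<le> length es \<Longrightarrow> is_path V inc F (take (Suc k) vs) (take k es)"
  unfolding is_path_def using is_walk_take by auto

lemma is_path_drop: "is_path V inc F vs es \<Longrightarrow> k \<le> length es \<Longrightarrow> is_path V inc F (drop k vs) (drop k es)"
  unfolding is_path_def using is_walk_drop by auto

lemma is_path_rev: "is_path V inc F vs es \<Longrightarrow> is_path V inc F (rev vs) (rev es)"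
  unfolding is_path_def using is_walk_rev by auto

lemma is_path_snoc:
  "is_path V inc F vs es \<Longrightarrow> x \<in> V \<Longrightarrow> e \<in> F \<Longrightarrow> inc e = {last vs, x} \<Longrightarrow> x \<notin> set vs
    \<Longrightarrow> is_path V inc F (vs @ [x]) (es @ [e])"
  unfolding is_path_def using is_walk_snoc by auto

section \<open>Root paths in the spanning tree\<close>

locale rooted_tree =
  fixes V :: "'v set" and E :: "'e set" and inc :: "'e \<Rightarrow> 'v set" and T :: "'e set"
    and r :: 'v and num :: "'v \<Rightarrow> 'e \<Rightarrow> nat"
  assumes graph: "finite_graph V E inc" and tree: "spanning_tree V E inc T"
    and root_in_V: "r \<in> V" and root_degree: "card {e \<in> T. r \<in> inc e} = 1"
    and numbering: "edge_numbering V E inc T r num"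
begin

abbreviation "eo \<equiv> eroot V inc T r"

lemma T_subset_E: "T \<subseteq> E"
  using tree unfolding spanning_tree_def by auto

lemma inc_edge: "e \<in> E \<Longrightarrow> inc e \<subseteq> V \<and> card (inc e) = 2"
  using graph unfolding finite_graph_def by auto

lemma finite_V: "finite V" and finite_E: "finite E"
  using graph unfolding finite_graph_def by auto

lemma tpath_path:
  assumes "u \<in> V" "v \<in> V"
  shows "is_path V inc T (fst (tpath V inc T u v)) (snd (tpath V inc T u v)) \<and>
    hd (fst (tpath V inc T u v)) = u \<and> last (fst (tpath V inc T u v)) = v"
proof -
  have "\<exists>!p. is_path V inc T (fst p) (snd p) \<and> hd (fst p) = u \<and> last (fst p) = v"
    using tree assms unfolding spanning_tree_def by auto
  then show ?thesis unfolding tpath_def by (rule theI')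
qed

lemma tpath_unique:
  assumes "is_path V inc T vs es" "hd vs = u" "last vs = v"
  shows "tpath V inc T u v = (vs, es)"
proof -
  have "vs \<noteq> []" "set vs \<subseteq> V" using assms(1) unfolding is_path_def is_walk_def by auto
  then have "u \<in> V" "v \<in> V" using assms by auto
  then have "\<exists>!p. is_path V inc T (fst p) (snd p) \<and> hd (fst p) = u \<and> last (fst p) = v"
    using tree unfolding spanning_tree_def by auto
  then show ?thesis unfolding tpath_def by (rule the1_equality) (use assms in auto)
qed

definition "rverts u = fst (tpath V inc T r u)"
definition "redges u = snd (tpath V inc T r u)"
definition "depth u = length (redges u)"
definition "parent u = rverts u ! (depth u - 1)"

lemma root_path:
  assumes "u \<in> V"
  shows "is_path V inc T (rverts u) (redges u)" "length (rverts u) = Suc (depth u)"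
    "rverts u ! depth u = u" "rverts u ! 0 = r" "set (rverts u) \<subseteq> V" "distinct (rverts u)"
    "hd (rverts u) = r" "last (rverts u) = u"
proof -
  show p: "is_path V inc T (rverts u) (redges u)" "hd (rverts u) = r" "last (rverts u) = u"
    using tpath_path[OF root_in_V assms] unfolding rverts_def redges_def by auto
  then show len: "length (rverts u) = Suc (depth u)" "set (rverts u) \<subseteq> V" "distinct (rverts u)"
    unfolding depth_def is_path_def is_walk_def by auto
  then have "rverts u \<noteq> []" by auto
  then have "last (rverts u) = rverts u ! depth u" "hd (rverts u) = rverts u ! 0"
    using len(1) by (simp_all add: last_conv_nth hd_conv_nth)
  then show "rverts u ! depth u = u" "rverts u ! 0 = r" using p(2,3) by simp_all
qed

lemma redges_nth:
  "u \<in> V \<Longrightarrow> i < depth u \<Longrightarrow> redges u ! i \<in> T \<and> inc (redges u ! i) = {rverts u ! i, rverts u ! Suc i}"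
  using root_path(1) unfolding is_path_def is_walk_def depth_def by auto

lemma ancestor:
  assumes "u \<in> V" "k \<le> depth u"
  shows "rverts (rverts u ! k) = take (Suc k) (rverts u)" "redges (rverts u ! k) = take k (redges u)"
    "depth (rverts u ! k) = k" "rverts u ! k \<in> V"
proof -
  have p: "is_path V inc T (take (Suc k) (rverts u)) (take k (redges u))"
    using is_path_take[OF root_path(1)[OF assms(1)]] assms(2) unfolding depth_def by auto
  have "hd (take (Suc k) (rverts u)) = r" using root_path(7)[OF assms(1)] by simp
  moreover have "last (take (Suc k) (rverts u)) = rverts u ! k"
    using root_path(2)[OF assms(1)] assms(2) by (simp add: take_Suc_conv_app_nth)
  ultimately have "tpath V inc T r (rverts u ! k) = (take (Suc k) (rverts u), take k (redges u))"
    by (rule tpath_unique[OF p])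
  then show "rverts (rverts u ! k) = take (Suc k) (rverts u)" "redges (rverts u ! k) = take k (redges u)"
    by (simp_all add: rverts_def redges_def)
  then show "depth (rverts u ! k) = k" using assms unfolding depth_def by simp
  have "k < length (rverts u)" using root_path(2)[OF assms(1)] assms(2) by simp
  then show "rverts u ! k \<in> V" using root_path(5)[OF assms(1)] nth_mem by blast
qed

lemma tpath_from_ancestor:
  assumes "u \<in> V" "k \<le> depth u"
  shows "tpath V inc T (rverts u ! k) u = (drop k (rverts u), drop k (redges u))"
proof (rule tpath_unique)
  show "is_path V inc T (drop k (rverts u)) (drop k (redges u))"
    using is_path_drop[OF root_path(1)[OF assms(1)]] assms(2) unfolding depth_def by auto
  show "hd (drop k (rverts u)) = rverts u ! k"
    using root_path(2)[OF assms(1)] assms(2) by (simp add: hd_drop_conv_nth)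
  show "last (drop k (rverts u)) = u"
    using root_path(2,8)[OF assms(1)] assms(2) by simp
qed

lemma tpath_to_root:
  assumes "u \<in> V"
  shows "tpath V inc T u r = (rev (rverts u), rev (redges u))"
  using tpath_unique[OF is_path_rev[OF root_path(1)[OF assms]]] root_path(7,8)[OF assms]
  by (simp add: hd_rev last_rev)

lemma depth_eq_0_iff: "u \<in> V \<Longrightarrow> depth u = 0 \<longleftrightarrow> u = r"
  by (metis ancestor(3) le0 root_path(3,4) root_in_V)

lemma eroot_eq:
  assumes "u \<in> V" "u \<noteq> r"
  shows "eo u = redges u ! (depth u - 1)"
  using tpath_to_root[OF assms(1)] depth_eq_0_iff[OF assms(1)] assms(2)
  unfolding eroot_def depth_def by (simp add: hd_rev last_conv_nth)

lemma eroot_parent: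
  assumes "u \<in> V" "u \<noteq> r"
  shows "eo u \<in> T" "inc (eo u) = {parent u, u}" "parent u \<in> V"
    "depth u = Suc (depth (parent u))" "parent u \<noteq> u"
proof -
  have d: "depth u > 0" using depth_eq_0_iff assms by auto
  then show "eo u \<in> T" "inc (eo u) = {parent u, u}"
    using redges_nth[OF assms(1), of "depth u - 1"] eroot_eq[OF assms] root_path(3)[OF assms(1)]
    unfolding parent_def by auto
  show "parent u \<in> V" "depth u = Suc (depth (parent u))"
    unfolding parent_def using ancestor[OF assms(1), of "depth u - 1"] d by auto
  then show "parent u \<noteq> u" by auto
qed

lemma eroot_incident: "u \<in> V \<Longrightarrow> u \<noteq> r \<Longrightarrow> u \<in> inc (eo u)"
  using eroot_parent(2) by auto

lemma eroot_in_E: "u \<in> V \<Longrightarrow> u \<noteq> r \<Longrightarrow> eo u \<in> E"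
  using eroot_parent(1) T_subset_E by auto

lemma eroot_rverts:
  assumes "u \<in> V" "k < depth u"
  shows "eo (rverts u ! Suc k) = redges u ! k" "rverts u ! Suc k \<noteq> r"
proof -
  have "Suc k \<le> depth u" using assms(2) by simp
  note a = ancestor[OF assms(1) this]
  show ne: "rverts u ! Suc k \<noteq> r"
  proof
    assume "rverts u ! Suc k = r"
    then have "depth r = Suc k" using a(3) assms by simp
    then show False using depth_eq_0_iff[OF root_in_V] by simp
  qed
  have "eo (rverts u ! Suc k) = redges (rverts u ! Suc k) ! k"
    using eroot_eq[OF a(4) ne] a(3) by simp
  then show "eo (rverts u ! Suc k) = redges u ! k" using a(2) by simp
qed

lemma inj_on_eroot: "inj_on eo (V - {r})"
proof (rule inj_onI)
  fix u w assume uw: "u \<in> V - {r}" "w \<in> V - {r}" "eo u = eo w"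
  then have eq: "{parent u, u} = {parent w, w}"
    using eroot_parent(2)[of u] eroot_parent(2)[of w] by simp
  show "u = w"
  proof (rule ccontr)
    assume "u \<noteq> w"
    then have "parent u = w" "parent w = u" using eq by (auto simp: doubleton_eq_iff)
    then show False using eroot_parent(4)[of u] eroot_parent(4)[of w] uw by simp
  qed
qed

lemma tree_edge_cases:
  assumes "e \<in> T" "x \<in> inc e"
  obtains y where "inc e = {x, y}" "x \<noteq> y" "x \<in> V" "y \<in> V"
    "(depth x = Suc (depth y) \<and> x \<noteq> r \<and> eo x = e) \<or> (depth y = Suc (depth x) \<and> y \<noteq> r \<and> eo y = e)"
proof -
  have c: "inc e \<subseteq> V" "card (inc e) = 2" using inc_edge assms T_subset_E by auto
  then obtain y where y: "inc e = {x, y}" "x \<noteq> y"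
    using assms(2) by (metis card_2_iff insert_commute insertE singletonD)
  have xy: "x \<in> V" "y \<in> V" using c y by auto
  have child: "depth a = Suc (depth b) \<and> a \<noteq> r \<and> eo a = e"
    if ab: "inc e = {a, b}" "a \<in> V" "b \<in> V" "a \<notin> set (rverts b)" for a b
  proof -
    have "inc e = {last (rverts b), a}" using ab root_path(8)[OF ab(3)] by (simp add: insert_commute)
    then have p: "is_path V inc T (rverts b @ [a]) (redges b @ [e])"
      using is_path_snoc[OF root_path(1)[OF ab(3)] ab(2) assms(1)] ab(4) by simp
    have "hd (rverts b @ [a]) = r" using root_path(2,7)[OF ab(3)] by (cases "rverts b") auto
    then have t: "tpath V inc T r a = (rverts b @ [a], redges b @ [e])" using tpath_unique[OF p] by simp
    then have d: "depth a = Suc (depth b)" unfolding depth_def redges_def by simp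
    then have "a \<noteq> r" using depth_eq_0_iff[OF root_in_V] by auto
    moreover have "eo a = e" using eroot_eq[OF ab(2) \<open>a \<noteq> r\<close>] t d
      unfolding redges_def depth_def by (simp add: nth_append)
    ultimately show ?thesis using d by auto
  qed
  have "x \<notin> set (rverts y) \<or> y \<notin> set (rverts x)"
  proof (rule ccontr)
    assume "\<not> ?thesis"
    then obtain k l where k: "k < length (rverts y)" "rverts y ! k = x"
      and l: "l < length (rverts x)" "rverts x ! l = y"
      by (auto simp: in_set_conv_nth)
    have "depth x \<le> depth y" using ancestor(3)[OF xy(2), of k] k root_path(2)[OF xy(2)] by simp
    moreover have "depth y \<le> depth x" using ancestor(3)[OF xy(1), of l] l root_path(2)[OF xy(1)] by simp
    ultimately have "k = depth y" using ancestor(3)[OF xy(2), of k] k root_path(2)[OF xy(2)] by simp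
    then show False using k root_path(3)[OF xy(2)] y(2) by simp
  qed
  then show ?thesis using that y xy child[of x y] child[of y x] by (auto simp: insert_commute)
qed

lemma common_ancestor:
  assumes "u \<in> V" "v \<in> V" "a \<le> depth u" "b \<le> depth v" "rverts u ! a = rverts v ! b"
  shows "a = b" "take (Suc a) (rverts u) = take (Suc a) (rverts v)" "take a (redges u) = take a (redges v)"
proof -
  show ab: "a = b" using ancestor(3)[OF assms(1,3)] ancestor(3)[OF assms(2,4)] assms(5) by simp
  show "take (Suc a) (rverts u) = take (Suc a) (rverts v)" "take a (redges u) = take a (redges v)"
    using ancestor(1,2)[OF assms(1,3)] ancestor(1,2)[OF assms(2,4)] arg_cong[OF assms(5), of rverts]
      arg_cong[OF assms(5), of redges] ab by simp_all
qed

lemma rverts_set_inj: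
  assumes "w \<in> V" "w' \<in> V" "set (rverts w') = set (rverts w)"
  shows "w' = w"
proof -
  have "rverts w' \<noteq> []" using root_path(2)[OF assms(2)] by auto
  then have "w' \<in> set (rverts w)" using root_path(8)[OF assms(2)] last_in_set assms(3) by metis
  then obtain a where a: "a \<le> depth w" "rverts w ! a = w'"
    using root_path(2)[OF assms(1)] by (auto simp: in_set_conv_nth less_Suc_eq_le)
  have "length (rverts w') = length (rverts w)"
    using assms(3) distinct_card[OF root_path(6)[OF assms(1)]] distinct_card[OF root_path(6)[OF assms(2)]] by simp
  then have "a = depth w" using ancestor(1)[OF assms(1) a(1)] a root_path(2)[OF assms(1)] by simp
  then show ?thesis using a root_path(3)[OF assms(1)] by simp
qed

definition "branch_depth u v k \<longleftrightarrow> k \<le> depth u \<and> k \<le> depth v \<and> rverts u ! k = rverts v ! k \<and>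
    (k < depth u \<longrightarrow> k < depth v \<longrightarrow> rverts u ! Suc k \<noteq> rverts v ! Suc k)"

lemma branch_depth_exists:
  assumes "u \<in> V" "v \<in> V"
  obtains k where "branch_depth u v k"
proof -
  define P where "P k \<longleftrightarrow> k \<le> depth u \<and> k \<le> depth v \<and> rverts u ! k = rverts v ! k" for k
  define m where "m = (GREATEST k. P k)"
  have "P 0" unfolding P_def using root_path(4) assms by simp
  then have m: "P m" "\<And>k. P k \<Longrightarrow> k \<le> m"
    using GreatestI_nat[of P 0 "depth u"] Greatest_le_nat[of P _ "depth u"] unfolding P_def m_def by auto
  have "rverts u ! Suc m \<noteq> rverts v ! Suc m" if "m < depth u" "m < depth v"
  proof
    assume "rverts u ! Suc m = rverts v ! Suc m"
    then have "P (Suc m)" using that unfolding P_def by simp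
    then show False using m(2) by fastforce
  qed
  then show ?thesis using that m(1) unfolding P_def branch_depth_def by blast
qed

lemma common_vertex_le_branch_depth:
  assumes "u \<in> V" "v \<in> V" "branch_depth u v k"
    "a \<le> depth u" "b \<le> depth v" "rverts u ! a = rverts v ! b"
  shows "a \<le> k"
proof (rule ccontr)
  assume "\<not> a \<le> k"
  moreover have "a = b" "take (Suc a) (rverts u) = take (Suc a) (rverts v)"
    using common_ancestor[OF assms(1,2,4,5,6)] by auto
  ultimately have "take (Suc a) (rverts u) ! Suc k = take (Suc a) (rverts v) ! Suc k" "Suc k < Suc a"
    by simp_all
  then have "rverts u ! Suc k = rverts v ! Suc k" by simp
  with assms(3-5) \<open>\<not> a \<le> k\<close> \<open>a = b\<close> show False unfolding branch_depth_def by simp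
qed

lemma rverts_inter_branch_depth:
  assumes "u \<in> V" "v \<in> V" "branch_depth u v k"
  shows "set (rverts u) \<inter> set (rverts v) = set (rverts (rverts u ! k))"
proof
  have k: "k \<le> depth u" "k \<le> depth v" "rverts u ! k = rverts v ! k"
    using assms(3) unfolding branch_depth_def by auto
  show "set (rverts u) \<inter> set (rverts v) \<subseteq> set (rverts (rverts u ! k))"
  proof
    fix x assume "x \<in> set (rverts u) \<inter> set (rverts v)"
    then obtain a b where "a \<le> depth u" "b \<le> depth v" "rverts u ! a = x" "rverts v ! b = x"
      using root_path(2) assms(1,2) by (auto simp: in_set_conv_nth less_Suc_eq_le)
    then have "a < length (take (Suc k) (rverts u))" "take (Suc k) (rverts u) ! a = x"
      using common_vertex_le_branch_depth[OF assms, of a b] root_path(2)[OF assms(1)] by auto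
    then show "x \<in> set (rverts (rverts u ! k))" unfolding ancestor(1)[OF assms(1) k(1)] by (metis nth_mem)
  qed
  show "set (rverts (rverts u ! k)) \<subseteq> set (rverts u) \<inter> set (rverts v)"
    unfolding ancestor(1)[OF assms(1) k(1)] using common_ancestor(2)[OF assms(1,2) k]
    by (metis Int_greatest set_take_subset)
qed

lemma redges_inter_branch_depth:
  assumes "u \<in> V" "v \<in> V" "branch_depth u v k"
  shows "set (redges u) \<inter> set (redges v) = set (redges (rverts u ! k))"
proof
  have k: "k \<le> depth u" "k \<le> depth v" "rverts u ! k = rverts v ! k"
    using assms(3) unfolding branch_depth_def by auto
  show "set (redges u) \<inter> set (redges v) \<subseteq> set (redges (rverts u ! k))"
  proof
    fix e assume "e \<in> set (redges u) \<inter> set (redges v)"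
    then obtain a b where ab: "a < depth u" "b < depth v" "redges u ! a = e" "redges v ! b = e"
      by (auto simp: in_set_conv_nth depth_def)
    \<comment> \<open>a tree edge is the root edge of its lower endpoint, which is therefore common to both paths\<close>
    have "eo (rverts u ! Suc a) = eo (rverts v ! Suc b)" using eroot_rverts(1) assms(1,2) ab by simp
    moreover have "rverts u ! Suc a \<in> V - {r}" "rverts v ! Suc b \<in> V - {r}"
      using eroot_rverts(2) ancestor(4) assms(1,2) ab by (auto simp: Suc_le_eq)
    ultimately have "rverts u ! Suc a = rverts v ! Suc b" using inj_on_eroot by (meson inj_onD)
    then have "Suc a \<le> k" using common_vertex_le_branch_depth[OF assms, of "Suc a" "Suc b"] ab by simp
    then have "a < length (take k (redges u))" "take k (redges u) ! a = e"
      using ab(1,3) by (auto simp: depth_def)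
    then show "e \<in> set (redges (rverts u ! k))" unfolding ancestor(2)[OF assms(1) k(1)] by (metis nth_mem)
  qed
  show "set (redges (rverts u ! k)) \<subseteq> set (redges u) \<inter> set (redges v)"
    unfolding ancestor(2)[OF assms(1) k(1)] using common_ancestor(3)[OF assms(1,2) k]
    by (metis Int_greatest set_take_subset)
qed

lemma tmeet_eq_branch_depth:
  assumes "u \<in> V" "v \<in> V" "branch_depth u v k"
  shows "tmeet V inc T r u v = rverts u ! k"
proof -
  define w where "w = rverts u ! k"
  have "k \<le> depth u" using assms(3) unfolding branch_depth_def by simp
  then have "w \<in> V" unfolding w_def using ancestor(4)[OF assms(1)] by simp
  note verts = rverts_inter_branch_depth[OF assms, folded w_def]
  note edges = redges_inter_branch_depth[OF assms, folded w_def]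
  show ?thesis unfolding tmeet_def w_def[symmetric]
  proof (rule the1_equality)
    show "w \<in> V \<and> set (fst (tpath V inc T r u)) \<inter> set (fst (tpath V inc T r v)) = set (fst (tpath V inc T r w)) \<and>
      set (snd (tpath V inc T r u)) \<inter> set (snd (tpath V inc T r v)) = set (snd (tpath V inc T r w))"
      using \<open>w \<in> V\<close> verts edges unfolding rverts_def redges_def by simp
    then show "\<exists>!w. w \<in> V \<and> set (fst (tpath V inc T r u)) \<inter> set (fst (tpath V inc T r v)) = set (fst (tpath V inc T r w)) \<and>
      set (snd (tpath V inc T r u)) \<inter> set (snd (tpath V inc T r v)) = set (snd (tpath V inc T r w))"
    proof (rule ex1I[of _ w])
      fix w' assume "w' \<in> V \<and> set (fst (tpath V inc T r u)) \<inter> set (fst (tpath V inc T r v)) = set (fst (tpath V inc T r w')) \<and>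
        set (snd (tpath V inc T r u)) \<inter> set (snd (tpath V inc T r v)) = set (snd (tpath V inc T r w'))"
      then have "w' \<in> V" "set (rverts w') = set (rverts w)" using verts unfolding rverts_def by auto
      then show "w' = w" using rverts_set_inj[OF \<open>w \<in> V\<close>] by blast
    qed
  qed
qed

definition "key u = map (\<lambda>i. num (rverts u ! i) (redges u ! i)) [0..<depth u]"

lemma length_key: "length (key u) = depth u"
  unfolding key_def by simp

lemma key_ancestor:
  assumes "u \<in> V" "k \<le> depth u"
  shows "key (rverts u ! k) = take k (key u)"
  using ancestor[OF assms] assms(2) unfolding key_def by (intro nth_equalityI) auto

lemma gnum_eq_key:
  assumes "x \<in> V" "k < depth x"
  shows "gnum V inc T num (rverts x ! k) x = key x ! k"
  using tpath_from_ancestor[OF assms(1)] assms unfolding gnum_def key_def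
  by (simp add: hd_drop_conv_nth depth_def)

lemma key_differs_at_branch_depth:
  assumes "u \<in> V" "v \<in> V" "branch_depth u v k" "k < depth u" "k < depth v"
  shows "key u ! k \<noteq> key v ! k"
proof -
  define w where "w = rverts u ! k"
  have k: "rverts u ! k = rverts v ! k" "rverts u ! Suc k \<noteq> rverts v ! Suc k"
    using assms(3-5) unfolding branch_depth_def by auto
  have edges: "redges u ! k \<in> {e \<in> T. w \<in> inc e}" "redges v ! k \<in> {e \<in> T. w \<in> inc e}"
    using redges_nth[OF assms(1,4)] redges_nth[OF assms(2,5)] k(1) unfolding w_def by auto
  have "redges u ! k \<noteq> redges v ! k"
  proof
    assume "redges u ! k = redges v ! k"
    then have "eo (rverts u ! Suc k) = eo (rverts v ! Suc k)" using eroot_rverts(1) assms(1,2,4,5) by simp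
    moreover have "rverts u ! Suc k \<in> V - {r}" "rverts v ! Suc k \<in> V - {r}"
      using eroot_rverts(2) ancestor(4) assms(1,2,4,5) by (auto simp: Suc_le_eq)
    ultimately show False using inj_on_eroot k(2) by (meson inj_onD)
  qed
  \<comment> \<open>the root has a single tree edge, so w is not the root and num w is injective on the edges at w\<close>
  moreover have "w \<noteq> r"
  proof
    assume "w = r"
    then obtain x where "{e \<in> T. w \<in> inc e} = {x}" using root_degree card_1_singletonE by blast
    then show False using edges \<open>redges u ! k \<noteq> redges v ! k\<close> by simp
  qed
  moreover have "w \<in> V" unfolding w_def using ancestor(4)[OF assms(1)] assms(4) by simp
  ultimately have "inj_on (num w) {e \<in> E. w \<in> inc e}"
    using numbering unfolding edge_numbering_def bij_betw_def by simp
  then have "num w (redges u ! k) \<noteq> num w (redges v ! k)"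
    using edges T_subset_E \<open>redges u ! k \<noteq> redges v ! k\<close> by (auto dest: inj_onD)
  then show ?thesis using assms(4,5) k(1) unfolding key_def w_def by auto
qed

lemma vless_iff_key_less_distinct:
  assumes "u \<in> V" "v \<in> V" "u \<noteq> v"
  shows "(vless V inc T r num u v \<longleftrightarrow> key u < key v) \<and> key u \<noteq> key v"
proof -
  obtain k where branch: "branch_depth u v k" using branch_depth_exists[OF assms(1,2)] .
  then have k: "k \<le> depth u" "k \<le> depth v" "rverts u ! k = rverts v ! k" unfolding branch_depth_def by auto
  define w where "w = rverts u ! k"
  have meet: "tmeet V inc T r u v = w" unfolding w_def by (rule tmeet_eq_branch_depth[OF assms(1,2) branch])
  have prefix: "key w = take k (key u)" "key w = take k (key v)"
    using key_ancestor[OF assms(1) k(1)] key_ancestor[OF assms(2) k(2)] k(3) unfolding w_def by auto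
  consider (u_ancestor) "k = depth u" | (v_ancestor) "k < depth u" "k = depth v"
    | (branching) "k < depth u" "k < depth v"
    using k(1,2) by linarith
  then show ?thesis
  proof cases
    case u_ancestor
    then have "u = w" unfolding w_def using root_path(3)[OF assms(1)] by simp
    have "k \<noteq> depth v"
    proof
      assume "k = depth v"
      then have "v = rverts v ! k" using root_path(3)[OF assms(2)] by simp
      then show False using k(3) \<open>u = w\<close> assms(3) unfolding w_def by simp
    qed
    then have "key u < key v"
      using list_less_prefix[OF prefix(2)[folded \<open>u = w\<close>]] length_key[of v] k(2) by simp
    then show ?thesis using meet \<open>u = w\<close> assms(3) unfolding vless_def by auto
  next
    case v_ancestor
    then have "v = w" unfolding w_def using k(3) root_path(3)[OF assms(2)] by simp
    then have "key v < key u"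
      using list_less_prefix[OF prefix(1)[folded \<open>v = w\<close>]] length_key[of u] v_ancestor by simp
    then show ?thesis using meet \<open>v = w\<close> assms(3) unfolding vless_def by (auto simp: Let_def)
  next
    case branching
    have "w \<noteq> u" "w \<noteq> v"
      using nth_eq_iff_index_eq[OF root_path(6)[OF assms(1)], of k "depth u"] root_path(2,3)[OF assms(1)]
        nth_eq_iff_index_eq[OF root_path(6)[OF assms(2)], of k "depth v"] root_path(2,3)[OF assms(2)]
        branching k(3) unfolding w_def by auto
    have differ: "key u ! k \<noteq> key v ! k"
      using key_differs_at_branch_depth[OF assms(1,2) branch branching] .
    have "key u < key v \<longleftrightarrow> key u ! k < key v ! k"
      using list_less_first_difference[of k "key u" "key v"] prefix differ branching
      by (simp add: length_key)
    moreover have "vless V inc T r num u v \<longleftrightarrow> gnum V inc T num w u < gnum V inc T num w v"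
      using meet \<open>w \<noteq> u\<close> \<open>w \<noteq> v\<close> assms(3) unfolding vless_def by (simp add: Let_def)
    moreover have "gnum V inc T num w u = key u ! k" "gnum V inc T num w v = key v ! k"
      using gnum_eq_key[OF assms(1) branching(1)] gnum_eq_key[OF assms(2) branching(2)] k(3)
      unfolding w_def by simp_all
    ultimately show ?thesis using differ by auto
  qed
qed

lemma vless_iff_key_less:
  assumes "u \<in> V" "v \<in> V"
  shows "vless V inc T r num u v \<longleftrightarrow> key u < key v"
proof (cases "u = v")
  case True
  then show ?thesis unfolding vless_def by simp
next
  case False
  then show ?thesis using vless_iff_key_less_distinct[OF assms] by blast
qed

lemma key_less_linear: "u \<in> V \<Longrightarrow> v \<in> V \<Longrightarrow> u \<noteq> v \<Longrightarrow> key u < key v \<or> key v < key u"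
  using vless_iff_key_less_distinct by (auto simp: neq_iff)

end

lemma permutes_less_iff: "s permutes {..<n} \<Longrightarrow> s i < n \<longleftrightarrow> i < n"
  using permutes_in_image[of s "{..<n}" i] by simp

lemma act_eq_permute_list: "act a s = permute_list s a"
  unfolding act_def permute_list_def by simp

lemma length_act [simp]: "length (act a s) = length a"
  unfolding act_def by simp

lemma nth_act [simp]: "i < length a \<Longrightarrow> act a s ! i = a ! s i"
  unfolding act_def by simp

lemma act_id: "act a id = a"
  unfolding act_def by (simp add: map_nth)

lemma act_act:
  assumes "length a = n" "t permutes {..<n}"
  shows "act (act a s) t = act a (s \<circ> t)"
proof -
  have "t permutes {..<length a}" using assms by simp
  then show ?thesis unfolding act_eq_permute_list by (rule permute_list_compose[symmetric])
qed

lemma act_act_inv: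
  assumes "s permutes {..<n}" "length a = n"
  shows "act (act a s) (inv s) = a"
proof -
  have "act (act a s) (inv s) = act a (s \<circ> inv s)" using act_act[OF assms(2) permutes_inv[OF assms(1)]] .
  then show ?thesis using permutes_inv_o(1)[OF assms(1)] act_id by simp
qed

lemma act_list_update:
  assumes s: "s permutes {..<n}" and "length a = n" "i < n"
  shows "(act a s)[i := x] = act (a[s i := x]) s"
proof (rule nth_equalityI)
  fix k assume "k < length ((act a s)[i := x])"
  then have k: "k < n" "s k < n" using assms(2) permutes_less_iff[OF s] by auto
  have "s i = s k \<longleftrightarrow> i = k" using permutes_inj[OF s] by (meson injD)
  then show "(act a s)[i := x] ! k = act (a[s i := x]) s ! k"
    using k assms(2,3) permutes_less_iff[OF s, of i] by (simp add: nth_list_update)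
qed simp

lemma orbit_act: "s permutes {..<n} \<Longrightarrow> act a s \<in> orbit n a"
  unfolding orbit_def by blast

lemma orbit_self: "a \<in> orbit n a"
  using orbit_act[of id n a] by (simp add: act_id)

lemma orbit_act_subset:
  assumes "s permutes {..<n}" "length a = n"
  shows "orbit n (act a s) \<subseteq> orbit n a"
proof
  fix y assume "y \<in> orbit n (act a s)"
  then obtain t where t: "t permutes {..<n}" "y = act (act a s) t" unfolding orbit_def by blast
  then have "y = act a (s \<circ> t)" using act_act[OF assms(2) t(1)] by simp
  then show "y \<in> orbit n a" using orbit_act[OF permutes_compose[OF t(1) assms(1)]] by simp
qed

lemma orbit_eq:
  assumes "length a = n" "x \<in> orbit n a"
  shows "orbit n x = orbit n a"
proof -
  obtain s where s: "s permutes {..<n}" "x = act a s" using assms(2) unfolding orbit_def by blast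
  have "orbit n a = orbit n (act x (inv s))" using act_act_inv[OF s(1) assms(1)] s(2) by simp
  also have "\<dots> \<subseteq> orbit n x"
    by (rule orbit_act_subset[OF permutes_inv[OF s(1)]]) (use s(2) assms(1) in simp)
  finally show ?thesis using orbit_act_subset[OF s(1) assms(1)] s(2) by blast
qed

lemma cdim_update_face: "i < length a \<Longrightarrow> a ! i = Ed e \<Longrightarrow> Suc (cdim (a[i := Vx w])) = cdim a"
  unfolding cdim_def using length_filter_update[of i a is_Ed "Vx w"] by simp

locale configuration_space = rooted_tree V E inc T r num
  for V :: "'v set" and E :: "'e set" and inc T r num +
  fixes n :: nat
begin

abbreviation "D \<equiv> DnG n V E inc"
abbreviation "ub \<equiv> unblocked V inc T r"
abbreviation "PR \<equiv> pr V inc T r num"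
abbreviation "Wf \<equiv> W n V E inc T r num"

lemma DnG_length: "a \<in> D \<Longrightarrow> length a = n"
  unfolding DnG_def by auto

lemma DnG_cell: "a \<in> D \<Longrightarrow> i < n \<Longrightarrow> gcell_in V E (a ! i)"
  unfolding DnG_def by auto

lemma DnG_disjoint: "a \<in> D \<Longrightarrow> i < n \<Longrightarrow> j < n \<Longrightarrow> i \<noteq> j \<Longrightarrow> cverts inc (a ! i) \<inter> cverts inc (a ! j) = {}"
  unfolding DnG_def by auto

lemma DnG_vertex: "a \<in> D \<Longrightarrow> i < n \<Longrightarrow> a ! i = Vx v \<Longrightarrow> v \<in> V"
  using DnG_cell by fastforce

lemma DnG_vertex_distinct:
  "a \<in> D \<Longrightarrow> i < n \<Longrightarrow> j < n \<Longrightarrow> i \<noteq> j \<Longrightarrow> a ! i = Vx x \<Longrightarrow> a ! j = Vx y \<Longrightarrow> x \<noteq> y"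
  using DnG_disjoint by fastforce

lemma DnG_I:
  "length a = n \<Longrightarrow> (\<And>i. i < n \<Longrightarrow> gcell_in V E (a ! i)) \<Longrightarrow>
   (\<And>i j. i < n \<Longrightarrow> j < n \<Longrightarrow> i \<noteq> j \<Longrightarrow> cverts inc (a ! i) \<inter> cverts inc (a ! j) = {}) \<Longrightarrow> a \<in> D"
  unfolding DnG_def by auto

lemma DnG_update_subcell:
  assumes "a \<in> D" "i < n" "gcell_in V E c" "cverts inc c \<subseteq> cverts inc (a ! i)"
  shows "a[i := c] \<in> D"
proof (rule DnG_I)
  show "length (a[i := c]) = n" using DnG_length[OF assms(1)] by simp
  show "gcell_in V E (a[i := c] ! j)" if "j < n" for j
    using DnG_cell[OF assms(1) that] assms(2,3) DnG_length[OF assms(1)] by (cases "j = i") auto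
  show "cverts inc (a[i := c] ! j) \<inter> cverts inc (a[i := c] ! k) = {}" if "j < n" "k < n" "j \<noteq> k" for j k
    using DnG_disjoint[OF assms(1) that] assms(4) DnG_length[OF assms(1)] that
    by (cases "j = i"; cases "k = i") auto
qed

lemma unblocked_iff:
  "ub a i \<longleftrightarrow> i < length a \<and> (\<exists>v. a ! i = Vx v \<and> v \<noteq> r \<and>
     (\<forall>j<length a. j \<noteq> i \<longrightarrow> inc (eo v) \<inter> cverts inc (a ! j) = {}))"
  unfolding unblocked_def blocked_def by (cases "a ! i") auto

lemma unblockedE:
  assumes "ub a i"
  obtains v where "i < length a" "a ! i = Vx v" "v \<noteq> r"
    "\<And>j. j < length a \<Longrightarrow> j \<noteq> i \<Longrightarrow> inc (eo v) \<inter> cverts inc (a ! j) = {}"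
  using assms unfolding unblocked_iff by auto

lemma unblockedI:
  "i < length a \<Longrightarrow> a ! i = Vx v \<Longrightarrow> v \<noteq> r \<Longrightarrow>
    (\<And>j. j < length a \<Longrightarrow> j \<noteq> i \<Longrightarrow> inc (eo v) \<inter> cverts inc (a ! j) = {}) \<Longrightarrow> ub a i"
  unfolding unblocked_iff by auto

lemma unblocked_free:
  "ub a i \<Longrightarrow> a ! i = Vx v \<Longrightarrow> k < length a \<Longrightarrow> k \<noteq> i \<Longrightarrow> inc (eo v) \<inter> cverts inc (a ! k) = {}"
  unfolding unblocked_iff by auto

lemma blocked_by:
  assumes "i < length a" "a ! i = Vx y" "y \<noteq> r" "\<not> ub a i"
  obtains m where "m < length a" "m \<noteq> i" "inc (eo y) \<inter> cverts inc (a ! m) \<noteq> {}"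
  using assms unblockedI by blast

lemma blocker_where_differ:
  assumes "ub d l" "d ! l = Vx y" "x ! l = Vx y" "y \<noteq> r" "\<not> ub x l" "length x = length d"
    "\<And>k. k \<noteq> m \<Longrightarrow> x ! k = d ! k"
  shows "inc (eo y) \<inter> cverts inc (x ! m) \<noteq> {}"
proof -
  obtain k where k: "k < length x" "k \<noteq> l" "inc (eo y) \<inter> cverts inc (x ! k) \<noteq> {}"
    using blocked_by[of l x y] assms(1,3-6) by (auto elim: unblockedE)
  have "k = m"
  proof (rule ccontr)
    assume "k \<noteq> m"
    then show False using unblocked_free[OF assms(1,2), of k] k assms(6,7) by simp
  qed
  then show ?thesis using k(3) by simp
qed

lemma unblocked_mono:
  assumes "ub a i" "length b = length a" "b ! i = a ! i"
    "\<And>j. j < length a \<Longrightarrow> j \<noteq> i \<Longrightarrow> cverts inc (b ! j) \<subseteq> cverts inc (a ! j)"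
  shows "ub b i"
proof -
  obtain v where v: "i < length a" "a ! i = Vx v" "v \<noteq> r"
    "\<And>j. j < length a \<Longrightarrow> j \<noteq> i \<Longrightarrow> inc (eo v) \<inter> cverts inc (a ! j) = {}"
    using unblockedE[OF assms(1)] by blast
  show ?thesis
  proof (rule unblockedI)
    show "i < length b" "b ! i = Vx v" "v \<noteq> r" using v assms by auto
    fix j assume "j < length b" "j \<noteq> i"
    then show "inc (eo v) \<inter> cverts inc (b ! j) = {}" using v(4)[of j] assms(2) assms(4)[of j] by auto
  qed
qed

lemma unblocked_vertex:
  assumes "a \<in> D" "ub a i"
  obtains v where "i < n" "a ! i = Vx v" "v \<in> V" "v \<noteq> r"
  using unblockedE[OF assms(2)] DnG_length[OF assms(1)] DnG_vertex[OF assms(1)] by metis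

text \<open>A cell blocking y must contain the parent of y, the endpoint of e(y) other than y.\<close>
lemma unique_blocker:
  assumes "a \<in> D" "l < n" "a ! l = Vx y" "y \<noteq> r"
    "m < n" "m' < n" "m \<noteq> m'" "m \<noteq> l" "m' \<noteq> l"
    "inc (eo y) \<inter> cverts inc (a ! m) \<noteq> {}" "inc (eo y) \<inter> cverts inc (a ! m') \<noteq> {}"
  shows False
proof -
  have yV: "y \<in> V" using DnG_vertex assms(1-3) by blast
  have "parent y \<in> cverts inc (a ! k)" if k: "k < n" "k \<noteq> l" "inc (eo y) \<inter> cverts inc (a ! k) \<noteq> {}" for k
  proof -
    obtain z where z: "z \<in> inc (eo y)" "z \<in> cverts inc (a ! k)" using k(3) by blast
    have "z \<noteq> y" using DnG_disjoint[OF assms(1) k(1) assms(2) k(2)] assms(3) z(2) by auto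
    then show ?thesis using z eroot_parent(2)[OF yV assms(4)] by auto
  qed
  then show False using DnG_disjoint[OF assms(1,5,6,7)] assms by blast
qed

definition "least_unblocked a = (THE i. ub a i \<and>
   (\<forall>j. ub a j \<and> j \<noteq> i \<longrightarrow> vless V inc T r num (the_Vx (a ! i)) (the_Vx (a ! j))))"

lemma pr_eq: "PR a = (if \<exists>i. ub a i then Some (er V inc T r a (least_unblocked a)) else None)"
  unfolding pr_def least_unblocked_def by simp

lemma least_unblocked_eqI:
  assumes "a \<in> D" "ub a i" "\<And>j. ub a j \<Longrightarrow> j \<noteq> i \<Longrightarrow> key (the_Vx (a ! i)) < key (the_Vx (a ! j))"
  shows "least_unblocked a = i"
proof -
  have vless: "vless V inc T r num (the_Vx (a ! j)) (the_Vx (a ! k)) \<longleftrightarrow> key (the_Vx (a ! j)) < key (the_Vx (a ! k))"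
    if "ub a j" "ub a k" for j k
    using vless_iff_key_less unblocked_vertex[OF assms(1)] that by (metis the_Vx.simps)
  show ?thesis unfolding least_unblocked_def
  proof (rule the_equality)
    show "ub a i \<and> (\<forall>j. ub a j \<and> j \<noteq> i \<longrightarrow> vless V inc T r num (the_Vx (a ! i)) (the_Vx (a ! j)))"
      using assms(2,3) vless by blast
    fix i' assume i': "ub a i' \<and> (\<forall>j. ub a j \<and> j \<noteq> i' \<longrightarrow> vless V inc T r num (the_Vx (a ! i')) (the_Vx (a ! j)))"
    show "i' = i"
    proof (rule ccontr)
      assume "i' \<noteq> i"
      then have "key (the_Vx (a ! i')) < key (the_Vx (a ! i))" "key (the_Vx (a ! i)) < key (the_Vx (a ! i'))"
        using i' assms(2,3) vless by auto
      then show False by simp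
    qed
  qed
qed

lemma least_unblocked:
  assumes "a \<in> D" "\<exists>i. ub a i"
  shows "ub a (least_unblocked a)"
    "\<And>j. ub a j \<Longrightarrow> j \<noteq> least_unblocked a \<Longrightarrow> key (the_Vx (a ! least_unblocked a)) < key (the_Vx (a ! j))"
proof -
  let ?S = "{i. ub a i}" and ?k = "\<lambda>i. key (the_Vx (a ! i))"
  define m where "m = arg_min_on ?k ?S"
  have "finite ?S" by (rule finite_subset[of _ "{..<length a}"]) (auto simp: unblocked_def)
  then have m: "ub a m" "\<And>j. ub a j \<Longrightarrow> \<not> ?k j < ?k m"
    using arg_min_if_finite[of ?S ?k] assms(2) unfolding m_def by auto
  have "?k m < ?k j" if j: "ub a j" "j \<noteq> m" for j
  proof -
    obtain v w where "a ! m = Vx v" "a ! j = Vx w" "v \<in> V" "w \<in> V" "v \<noteq> w"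
      using unblocked_vertex[OF assms(1) m(1)] unblocked_vertex[OF assms(1) j(1)]
        DnG_vertex_distinct[OF assms(1)] j(2) by metis
    then show ?thesis using m(2)[OF j(1)] key_less_linear by auto
  qed
  then have "least_unblocked a = m" using least_unblocked_eqI[OF assms(1) m(1)] by blast
  then show "ub a (least_unblocked a)"
    "\<And>j. ub a j \<Longrightarrow> j \<noteq> least_unblocked a \<Longrightarrow> ?k (least_unblocked a) < ?k j"
    using m(1) \<open>\<And>j. ub a j \<Longrightarrow> j \<noteq> m \<Longrightarrow> ?k m < ?k j\<close> by auto
qed

lemma er_in_DnG:
  assumes "a \<in> D" "ub a i"
  shows "er V inc T r a i \<in> D"
proof -
  obtain v where v: "i < length a" "a ! i = Vx v" "v \<noteq> r"
    "\<And>j. j < length a \<Longrightarrow> j \<noteq> i \<Longrightarrow> inc (eo v) \<inter> cverts inc (a ! j) = {}"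
    using unblockedE[OF assms(2)] by blast
  have L: "length a = n" using DnG_length[OF assms(1)] .
  have "eo v \<in> E" using eroot_in_E DnG_vertex assms(1) v L by simp
  show ?thesis unfolding er_def v(2) the_Vx.simps
  proof (rule DnG_I)
    show "length (a[i := Ed (eo v)]) = n" using L by simp
    show "gcell_in V E (a[i := Ed (eo v)] ! j)" if "j < n" for j
      using DnG_cell[OF assms(1) that] \<open>eo v \<in> E\<close> v(1) by (cases "j = i") auto
    show "cverts inc (a[i := Ed (eo v)] ! j) \<inter> cverts inc (a[i := Ed (eo v)] ! k) = {}"
      if "j < n" "k < n" "j \<noteq> k" for j k
      using v(4)[of k] v(4)[of j] DnG_disjoint[OF assms(1) that] that L
      by (cases "j = i"; cases "k = i") (auto simp: Int_commute)
  qed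
qed

lemma pr_SomeE:
  assumes "b \<in> D" "PR b = Some a"
  obtains m v where "ub b m" "least_unblocked b = m" "b ! m = Vx v" "v \<in> V" "v \<noteq> r" "m < n"
    "a = b[m := Ed (eo v)]"
    "\<And>j. ub b j \<Longrightarrow> j \<noteq> m \<Longrightarrow> key v < key (the_Vx (b ! j))"
proof -
  have ex: "\<exists>i. ub b i" and a: "a = er V inc T r b (least_unblocked b)"
    using assms(2) unfolding pr_eq by (auto split: if_splits)
  note lu = least_unblocked[OF assms(1) ex]
  obtain v where "least_unblocked b < n" "b ! least_unblocked b = Vx v" "v \<in> V" "v \<noteq> r"
    using unblocked_vertex[OF assms(1) lu(1)] by blast
  then show ?thesis using that lu a unfolding er_def by simp
qed

lemma pr_Some_least:
  assumes "b \<in> D" "PR b = Some a" "least_unblocked b = m" "b ! m = Vx v"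
  shows "ub b m" "v \<in> V" "v \<noteq> r" "m < n" "a = b[m := Ed (eo v)]"
    "\<And>j. ub b j \<Longrightarrow> j \<noteq> m \<Longrightarrow> key v < key (the_Vx (b ! j))"
  using pr_SomeE[OF assms(1,2)] assms(3,4) by (metis gcell.inject(1))+

lemma pr_in_DnG: "b \<in> D \<Longrightarrow> PR b = Some a \<Longrightarrow> a \<in> D"
  using er_in_DnG least_unblocked(1) unfolding pr_eq by (auto split: if_splits)

lemma cdim_pr:
  assumes "b \<in> D" "PR b = Some a"
  shows "cdim a = Suc (cdim b)"
proof -
  obtain m v where m: "b ! m = Vx v" "m < n" "a = b[m := Ed (eo v)]"
    using pr_SomeE[OF assms] by metis
  then have "a[m := Vx v] = b" by (metis list_update_id list_update_overwrite)
  then show ?thesis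
    using cdim_update_face[of m a "eo v" v] m DnG_length[OF assms(1)] by simp
qed

lemma pr_vertex_face:
  assumes aD: "a \<in> D" and i: "i < n" "a ! i = Ed (eo w)" "w \<in> V" "w \<noteq> r"
    and least: "\<And>j. ub (a[i := Vx w]) j \<Longrightarrow> j \<noteq> i \<Longrightarrow> key w < key (the_Vx (a[i := Vx w] ! j))"
  shows "a[i := Vx w] \<in> D" "PR (a[i := Vx w]) = Some a"
proof -
  define d where "d = a[i := Vx w]"
  have L: "length a = n" using DnG_length[OF aD] .
  show dD: "a[i := Vx w] \<in> D"
    using DnG_update_subcell[OF aD i(1), of "Vx w"] i(2,3) eroot_incident[OF i(3,4)] by auto
  have ub_d: "ub d i"
  proof (rule unblockedI)
    show "i < length d" "d ! i = Vx w" "w \<noteq> r" using L i unfolding d_def by auto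
    fix j assume "j < length d" "j \<noteq> i"
    then show "inc (eo w) \<inter> cverts inc (d ! j) = {}"
      using DnG_disjoint[OF aD i(1), of j] i(2) L unfolding d_def by auto
  qed
  have "d ! i = Vx w" using L i(1) unfolding d_def by simp
  then have "least_unblocked d = i"
    using least_unblocked_eqI[OF dD[folded d_def] ub_d] least unfolding d_def by simp
  then show "PR (a[i := Vx w]) = Some a"
    using ub_d i(2) L i(1) list_update_id[of a i] unfolding pr_eq d_def[symmetric] er_def
    by (auto simp: d_def)
qed

section \<open>The field W\<close>

text \<open>The redundant and collapsible cells of Farley and Sabalka; by W_iff, W pairs every redundant
  cell with its image under pr.\<close>
definition "collapsible a \<longleftrightarrow> (\<exists>b\<in>D. PR b = Some a)"

definition "redundant a \<longleftrightarrow> a \<in> D \<and> PR a \<noteq> None \<and> \<not> collapsible a"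

lemma least_unblocked_face:
  assumes "i < length a" "a ! i = Ed e" "a[i := Vx w] \<in> D" "PR (a[i := Vx w]) = Some a"
  shows "least_unblocked (a[i := Vx w]) = i"
proof (rule ccontr)
  assume ne: "least_unblocked (a[i := Vx w]) \<noteq> i"
  obtain m v where m: "ub (a[i := Vx w]) m" "least_unblocked (a[i := Vx w]) = m" "a[i := Vx w] ! m = Vx v"
      "v \<in> V" "v \<noteq> r" "m < n" "a = a[i := Vx w, m := Ed (eo v)]"
    by (rule pr_SomeE[OF assms(3,4)])
  have "m < length a" using m(6) DnG_length[OF assms(3)] by simp
  have "a ! m = a[i := Vx w, m := Ed (eo v)] ! m" using m(7) by (rule arg_cong)
  also have "\<dots> = Ed (eo v)" using \<open>m < length a\<close> by simp
  finally show False using m(2,3) ne by simp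
qed

lemma collapsibleE:
  assumes "collapsible a"
  obtains i w where "i < n" "w \<in> V" "w \<noteq> r" "a ! i = Ed (eo w)" "a[i := Vx w] \<in> D"
    "PR (a[i := Vx w]) = Some a" "least_unblocked (a[i := Vx w]) = i"
proof -
  obtain b where b: "b \<in> D" "PR b = Some a" using assms unfolding collapsible_def by blast
  then obtain m v where m: "b ! m = Vx v" "v \<in> V" "v \<noteq> r" "m < n" "a = b[m := Ed (eo v)]"
    by (elim pr_SomeE) blast
  have "a[m := Vx v] = b" using m by (metis list_update_id list_update_overwrite)
  moreover have "a ! m = Ed (eo v)" using m DnG_length[OF b(1)] by simp
  ultimately show ?thesis
    using that[OF m(4,2,3)] least_unblocked_face[of m a "eo v" v] m(4) b DnG_length[OF b(1)] m(5) by simp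
qed

lemma collapsible_pr: "b \<in> D \<Longrightarrow> PR b = Some a \<Longrightarrow> collapsible a"
  unfolding collapsible_def by blast

text \<open>A cell mapped onto the face a[i0 := Vx w0] by pr would exhibit a face of a mapped onto a by pr
  whose new vertex precedes w0.\<close>
lemma least_preimage_not_collapsible:
  assumes aD: "a \<in> D" and i0: "i0 < n" "a ! i0 = Ed (eo w0)" "w0 \<in> V" "w0 \<noteq> r"
    and bD: "a[i0 := Vx w0] \<in> D" and least: "\<And>i w. i < n \<Longrightarrow> w \<in> V \<Longrightarrow> a ! i = Ed (eo w) \<Longrightarrow>
      a[i := Vx w] \<in> D \<Longrightarrow> PR (a[i := Vx w]) = Some a \<Longrightarrow> key w0 \<le> key w"
  shows "\<not> collapsible (a[i0 := Vx w0])"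
proof
  define b where "b = a[i0 := Vx w0]"
  assume "collapsible (a[i0 := Vx w0])"
  then obtain i1 w1 where i1: "i1 < n" "w1 \<in> V" "w1 \<noteq> r" "b ! i1 = Ed (eo w1)" "b[i1 := Vx w1] \<in> D"
      "PR (b[i1 := Vx w1]) = Some b" "least_unblocked (b[i1 := Vx w1]) = i1"
    unfolding b_def[symmetric] by (rule collapsibleE)
  define c where "c = b[i1 := Vx w1]"
  have L: "length a = n" "length c = n" using DnG_length[OF aD] DnG_length[OF i1(5)] unfolding c_def by auto
  have ne: "i1 \<noteq> i0" using i1(4) L(1) i0(1) unfolding b_def by auto
  have c: "c ! i1 = Vx w1" "c ! i0 = Vx w0" "\<And>j. j \<noteq> i0 \<Longrightarrow> j \<noteq> i1 \<Longrightarrow> c ! j = a ! j"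
    using L i1(1) i0(1) ne unfolding c_def b_def by auto
  have a_i1: "a ! i1 = Ed (eo w1)" using i1(4) ne unfolding b_def by simp
  have "ub c i0"
  proof (rule unblockedI)
    show "i0 < length c" "c ! i0 = Vx w0" "w0 \<noteq> r" using c L i0 by auto
    fix j assume j: "j < length c" "j \<noteq> i0"
    show "inc (eo w0) \<inter> cverts inc (c ! j) = {}"
    proof (cases "j = i1")
      case True
      then show ?thesis using DnG_disjoint[OF aD i0(1) i1(1)] ne c i0(2) a_i1 eroot_incident[OF i1(2,3)] by auto
    next
      case False
      then show ?thesis using DnG_disjoint[OF aD i0(1), of j] j c(3)[of j] i0(2) L by auto
    qed
  qed
  obtain m v where m: "ub c m" "least_unblocked c = m" "c ! m = Vx v"
      "\<And>j. ub c j \<Longrightarrow> j \<noteq> m \<Longrightarrow> key v < key (the_Vx (c ! j))"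
    using pr_SomeE[OF i1(5,6)] unfolding c_def[symmetric] by blast
  have "m = i1" "v = w1" using m(2,3) i1(7) c(1) unfolding c_def by auto
  then have least_c: "\<And>j. ub c j \<Longrightarrow> j \<noteq> i1 \<Longrightarrow> key w1 < key (the_Vx (c ! j))" using m(4) by blast
  then have "key w1 < key w0" using \<open>ub c i0\<close> c(2) ne by fastforce
  moreover have "key w0 \<le> key w1"
  proof -
    \<comment> \<open>every vertex unblocked in the face of a at i1 is unblocked in c, where w1 is least\<close>
    have "key w1 < key (the_Vx (a[i1 := Vx w1] ! j))" if j: "ub (a[i1 := Vx w1]) j" "j \<noteq> i1" for j
    proof -
      have "j \<noteq> i0" using j(1) i0(2) ne by (auto elim: unblockedE)
      have "ub c j"
      proof (rule unblocked_mono[OF j(1)])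
        show "length c = length (a[i1 := Vx w1])" "c ! j = a[i1 := Vx w1] ! j"
          using L c(3) \<open>j \<noteq> i0\<close> j(2) by auto
        fix l assume "l < length (a[i1 := Vx w1])" "l \<noteq> j"
        show "cverts inc (c ! l) \<subseteq> cverts inc (a[i1 := Vx w1] ! l)"
          using c eroot_incident[OF i0(3,4)] i0(2) L i1(1) by (cases "l = i0"; cases "l = i1") auto
      qed
      then have "key w1 < key (the_Vx (c ! j))" using least_c j(2) by blast
      then show ?thesis using c(3)[OF \<open>j \<noteq> i0\<close> j(2)] j(2) by simp
    qed
    then show ?thesis using least[OF i1(1,2) a_i1] pr_vertex_face[OF aD i1(1) a_i1 i1(2,3)] by blast
  qed
  ultimately show False by simp
qed

lemma collapsible_has_redundant_preimage:
  assumes "a \<in> D" "collapsible a"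
  obtains b where "redundant b" "PR b = Some a"
proof -
  define S where "S = {w \<in> V. \<exists>i<n. a ! i = Ed (eo w) \<and> a[i := Vx w] \<in> D \<and> PR (a[i := Vx w]) = Some a}"
  define w0 where "w0 = arg_min_on key S"
  have "S \<noteq> {}" using collapsibleE[OF assms(2)] unfolding S_def by blast
  moreover have "finite S" unfolding S_def using finite_V by simp
  ultimately have "w0 \<in> S" "\<And>w. w \<in> S \<Longrightarrow> key w0 \<le> key w"
    using arg_min_if_finite arg_min_least unfolding w0_def by metis+
  then obtain i0 where i0: "i0 < n" "a ! i0 = Ed (eo w0)" "a[i0 := Vx w0] \<in> D" "PR (a[i0 := Vx w0]) = Some a"
      "w0 \<in> V" "\<And>i w. i < n \<Longrightarrow> w \<in> V \<Longrightarrow> a ! i = Ed (eo w) \<Longrightarrow> a[i := Vx w] \<in> D \<Longrightarrow>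
        PR (a[i := Vx w]) = Some a \<Longrightarrow> key w0 \<le> key w"
    unfolding S_def by blast
  obtain m v where "least_unblocked (a[i0 := Vx w0]) = m" "a[i0 := Vx w0] ! m = Vx v" "v \<noteq> r"
    using pr_SomeE[OF i0(3,4)] by blast
  moreover have "least_unblocked (a[i0 := Vx w0]) = i0"
    using least_unblocked_face[of i0 a "eo w0" w0] i0 DnG_length[OF assms(1)] by simp
  ultimately have "w0 \<noteq> r" using i0(1) DnG_length[OF assms(1)] by auto
  then have "\<not> collapsible (a[i0 := Vx w0])"
    using least_preimage_not_collapsible[OF assms(1) i0(1,2,5)] i0(3,6) by blast
  then show ?thesis using that i0(3,4) unfolding redundant_def by simp
qed

lemma Wk_eq: "Wk n V E inc T r num k = {(a, the (PR a)) | a. redundant a \<and> cdim a = k}"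
proof (induction k)
  case 0
  have "\<not> collapsible a" if "a \<in> D" "cdim a = 0" for a
  proof
    assume "collapsible a"
    then obtain i w where "i < n" "a ! i = Ed (eo w)" by (rule collapsibleE)
    then have "Ed (eo w) \<in> set a" using DnG_length[OF that(1)] nth_mem by force
    then show False using that(2) unfolding cdim_def by (auto simp: filter_empty_conv)
  qed
  then show ?case unfolding Wk.simps redundant_def by blast
next
  case (Suc k)
  have "a \<in> snd ` Wk n V E inc T r num k \<longleftrightarrow> collapsible a" if a: "a \<in> D" "cdim a = Suc k" for a
  proof
    assume "a \<in> snd ` Wk n V E inc T r num k"
    then show "collapsible a" using Suc collapsible_pr unfolding redundant_def by fastforce
  next
    assume "collapsible a"
    then obtain b where "redundant b" "PR b = Some a" by (rule collapsible_has_redundant_preimage[OF a(1)])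
    moreover from this have "cdim b = k" using cdim_pr a(2) unfolding redundant_def by fastforce
    ultimately show "a \<in> snd ` Wk n V E inc T r num k" unfolding Suc by force
  qed
  then show ?case unfolding Wk.simps redundant_def by blast
qed

lemma W_iff: "(b, a) \<in> Wf \<longleftrightarrow> redundant b \<and> PR b = Some a"
  unfolding W_def using Wk_eq unfolding redundant_def by fastforce

lemma W_D: "(b, a) \<in> Wf \<Longrightarrow> b \<in> D \<and> a \<in> D"
  using W_iff pr_in_DnG unfolding redundant_def by blast

lemma pr_collision_collapsible:
  assumes aD: "a \<in> D" and bD: "b \<in> D" and pra: "PR a = Some c" and prb: "PR b = Some c"
    and i: "least_unblocked a = i" "a ! i = Vx v" and j: "least_unblocked b = j" "b ! j = Vx w"
    and ij: "i \<noteq> j" and vw: "key v < key w"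
  shows "collapsible b"
proof -
  note a' = pr_Some_least[OF aD pra i]
  note b' = pr_Some_least[OF bD prb j]
  have cD: "c \<in> D" using pr_in_DnG[OF aD pra] .
  have L: "length a = n" "length b = n" "length c = n" using DnG_length aD bD cD by auto
  have c_i: "c ! i = Ed (eo v)" "c ! j = Ed (eo w)"
    by (simp only: a'(5), use a'(4) L in simp) (simp only: b'(5), use b'(4) L in simp)
  have "b ! i = c ! i" unfolding b'(5) using ij by simp
  moreover have "a ! j = c ! j" unfolding a'(5) using ij by simp
  ultimately have b_i: "b ! i = Ed (eo v)" and a_j: "a ! j = Ed (eo w)" using c_i by simp_all
  have same: "a ! l = c ! l" "b ! l = c ! l" if "l \<noteq> i" "l \<noteq> j" for l
    by (simp only: a'(5), use that in simp) (simp only: b'(5), use that in simp)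
  have v_inc: "v \<in> inc (eo v)" and w_inc: "w \<in> inc (eo w)" using eroot_incident a'(2,3) b'(2,3) by auto
  define d where "d = b[i := Vx v]"
  have dD: "d \<in> D" unfolding d_def using DnG_update_subcell[OF bD a'(4), of "Vx v"] b_i v_inc a'(2) by auto
  have d: "d ! i = Vx v" "d ! j = Vx w" "\<And>l. l \<noteq> i \<Longrightarrow> l \<noteq> j \<Longrightarrow> d ! l = c ! l"
    using L a'(4) ij j(2) same unfolding d_def by auto
  have "key v < key (the_Vx (d ! l))" if l: "ub d l" "l \<noteq> i" for l
  proof (cases "l = j")
    case True
    then show ?thesis using d(2) vw by simp
  next
    case False
    obtain y where y: "l < n" "d ! l = Vx y" "y \<in> V" "y \<noteq> r" using unblocked_vertex[OF dD l(1)] by blast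
    have cl: "c ! l = Vx y" "a ! l = Vx y" "b ! l = Vx y"
      using d(3)[OF l(2) False] y(2) same[OF l(2) False] by simp_all
    show ?thesis
    proof (rule ccontr)
      assume "\<not> ?thesis"
      moreover have "y \<noteq> v" using DnG_vertex_distinct[OF dD a'(4) y(1) l(2)[symmetric] d(1) y(2)] by simp
      ultimately have yv: "key y < key v" using key_less_linear[OF y(3) a'(2)] y(2) by auto
      \<comment> \<open>y precedes the least unblocked vertices of a and b, so it is blocked in both, by the
        cells where they differ from d: the edges e(w) and e(v) of c\<close>
      have "\<not> ub a l"
      proof
        assume "ub a l"
        then have "key v < key y" using a'(6)[of l] l(2) cl(2) by simp
        then show False using yv by simp
      qed
      moreover have "a ! k = d ! k" if "k \<noteq> j" for k
        using d(1) d(3)[of k] i(2) same(1)[of k] that by (cases "k = i") simp_all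
      ultimately have "inc (eo y) \<inter> cverts inc (a ! j) \<noteq> {}"
        using blocker_where_differ[OF l(1) y(2) cl(2) y(4)] L DnG_length[OF dD] by simp
      moreover have "\<not> ub b l"
      proof
        assume "ub b l"
        then have "key w < key y" using b'(6)[of l] False cl(3) by simp
        then show False using yv vw by simp
      qed
      then have "inc (eo y) \<inter> cverts inc (b ! i) \<noteq> {}"
        using blocker_where_differ[OF l(1) y(2) cl(3) y(4)] L DnG_length[OF dD] unfolding d_def by simp
      ultimately have "inc (eo y) \<inter> cverts inc (c ! j) \<noteq> {}" "inc (eo y) \<inter> cverts inc (c ! i) \<noteq> {}"
        using a_j b_i c_i by simp_all
      then show False
        using unique_blocker[OF cD y(1) cl(1) y(4) b'(4) a'(4) ij[symmetric]] False l(2) by metis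
    qed
  qed
  then show ?thesis
    using pr_vertex_face[OF bD a'(4) b_i a'(2,3)] collapsible_pr unfolding d_def by blast
qed

lemma redundant_pr_inj:
  assumes "redundant a" "redundant b" "PR a = PR b"
  shows "a = b"
proof -
  have aD: "a \<in> D" and bD: "b \<in> D" using assms(1,2) unfolding redundant_def by auto
  obtain c where pra: "PR a = Some c" using assms(1) unfolding redundant_def by auto
  then have prb: "PR b = Some c" using assms(3) by simp
  obtain i v where a: "least_unblocked a = i" "a ! i = Vx v" "v \<in> V" "v \<noteq> r" "i < n" "c = a[i := Ed (eo v)]"
    by (rule pr_SomeE[OF aD pra])
  obtain j w where b: "least_unblocked b = j" "b ! j = Vx w" "w \<in> V" "w \<noteq> r" "j < n" "c = b[j := Ed (eo w)]"
    by (rule pr_SomeE[OF bD prb])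
  have L: "length a = n" "length b = n" using DnG_length aD bD by auto
  show ?thesis
  proof (cases "i = j")
    case True
    have "c ! i = Ed (eo v)" unfolding a(6) using a(5) L by simp
    moreover have "c ! j = Ed (eo w)" unfolding b(6) using b(5) L by simp
    ultimately have "eo v = eo w" using True by simp
    then have "v = w" using inj_on_eroot a(3,4) b(3,4) by (auto dest: inj_onD)
    then show ?thesis using a(2,6) b(2,6) True by (metis list_update_id list_update_overwrite)
  next
    case False
    have "v \<noteq> w"
    proof
      assume "v = w"
      have "c ! i = Ed (eo v)" "c ! j = Ed (eo w)"
        by (simp only: a(6), use a(5) L in simp) (simp only: b(6), use b(5) L in simp)
      then show False
        using DnG_disjoint[OF pr_in_DnG[OF aD pra] a(5) b(5) False] eroot_incident[OF a(3,4)] \<open>v = w\<close> by auto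
    qed
    then have "key v < key w \<or> key w < key v" using key_less_linear a(3) b(3) by blast
    then show ?thesis
      using pr_collision_collapsible[OF aD bD pra prb a(1,2) b(1,2) False]
        pr_collision_collapsible[OF bD aD prb pra b(1,2) a(1,2) False[symmetric]] assms(1,2)
      unfolding redundant_def by blast
  qed
qed

lemma W_face:
  assumes "(t, nu) \<in> Wf"
  shows "imm_face inc t nu"
proof -
  have tD: "t \<in> D" and pr: "PR t = Some nu" using assms W_iff unfolding redundant_def by auto
  obtain m v where m: "t ! m = Vx v" "v \<in> V" "v \<noteq> r" "m < n" "nu = t[m := Ed (eo v)]"
    by (rule pr_SomeE[OF tD pr])
  have "t = nu[m := Vx v]" using m by (metis list_update_id list_update_overwrite)
  moreover have "m < length nu" "nu ! m = Ed (eo v)" using m DnG_length[OF tD] by auto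
  ultimately show ?thesis using eroot_incident[OF m(2,3)] unfolding imm_face_def by blast
qed

lemma W_discrete_vector_field: "discrete_vector_field D (imm_face inc) Wf"
  unfolding discrete_vector_field_def
proof (intro conjI ballI impI)
  show "case p of (\<tau>, \<nu>) \<Rightarrow> \<tau> \<in> D \<and> \<nu> \<in> D \<and> imm_face inc \<tau> \<nu>" if "p \<in> Wf" for p
    using that W_D W_face by (cases p) auto
  fix p q assume pq: "p \<in> Wf" "q \<in> Wf" "p \<noteq> q"
  obtain a c b c' where p: "p = (a, c)" and q: "q = (b, c')" by (cases p, cases q)
  have a: "redundant a" "PR a = Some c" and b: "redundant b" "PR b = Some c'"
    using pq W_iff p q by auto
  have "a \<noteq> b" using pq a b p q by auto
  moreover have "c \<noteq> c'" using redundant_pr_inj[OF a(1) b(1)] a b \<open>a \<noteq> b\<close> by auto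
  moreover have "a \<noteq> c'" "b \<noteq> c" using collapsible_pr a b unfolding redundant_def by auto
  ultimately show "{fst p, snd p} \<inter> {fst q, snd q} = {}" using p q by auto
qed

section \<open>Acyclicity\<close>

text \<open>A tree edge e(x) has height 2 depth x - 1, strictly between the heights of its endpoints.\<close>
definition "cell_height c = (case c of Vx x \<Rightarrow> 2 * depth x | Ed e \<Rightarrow> if e \<in> T then sum depth (inc e) else 0)"

definition "height a = sum_list (map cell_height a)"

definition "nontree_edge c = (case c of Ed e \<Rightarrow> e \<notin> T | Vx x \<Rightarrow> False)"

definition "potential a = (length (filter nontree_edge a), height a, key (the_Vx (a ! least_unblocked a)))"

lemma cell_height_eroot: "v \<in> V \<Longrightarrow> v \<noteq> r \<Longrightarrow> Suc (cell_height (Ed (eo v))) = cell_height (Vx v)"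
  using eroot_parent[of v] unfolding cell_height_def by simp

lemma unblocked_upper_face:
  assumes tD: "t \<in> D" and prt: "PR t = Some nu" and i: "least_unblocked t = i" "t ! i = Vx v"
    and j: "j < n" "j \<noteq> i" "t ! j = Ed (eo x)" "x \<in> V" "x \<noteq> r"
    and p: "ub (t[j := Vx x]) p" "p \<noteq> i" "t[j := Vx x] ! p = Vx y" "key y < key v"
  shows "ub (nu[j := Vx x]) p"
proof -
  note pr = pr_Some_least[OF tD prt i]
  have nuD: "nu \<in> D" using pr_in_DnG[OF tD prt] .
  have L: "length t = n" "length nu = n" using DnG_length tD nuD by auto
  have nu: "nu ! i = Ed (eo v)" "nu ! j = Ed (eo x)" "\<And>l. l \<noteq> i \<Longrightarrow> nu ! l = t ! l"
    unfolding pr(5) using pr(4) j L by auto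
  have "p < n" "y \<noteq> r" using p(1,3) L by (auto elim: unblockedE)
  show ?thesis
  proof (rule unblockedI)
    show "p < length (nu[j := Vx x])" "y \<noteq> r" using \<open>p < n\<close> \<open>y \<noteq> r\<close> L by simp_all
    show "nu[j := Vx x] ! p = Vx y" using \<open>p < n\<close> p(2,3) nu(3) L by (cases "p = j") auto
    fix l assume l: "l < length (nu[j := Vx x])" "l \<noteq> p"
    show "inc (eo y) \<inter> cverts inc (nu[j := Vx x] ! l) = {}"
    proof (cases "l = i")
      case False
      then have "nu[j := Vx x] ! l = t[j := Vx x] ! l" using nu(3) j(1) L by (cases "l = j") auto
      then show ?thesis using unblocked_free[OF p(1,3), of l] l L by simp
    next
      case True
      show ?thesis
      proof (cases "p = j")
        case True
        then have "y = x" using p(3) j(1) L by simp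
        then show ?thesis using DnG_disjoint[OF nuD pr(4) j(1) j(2)[symmetric]] nu(1,2) \<open>l = i\<close> j(2) by (simp add: Int_commute)
      next
        case False
        have t_p: "t ! p = Vx y" using p(3) False by simp
        \<comment> \<open>y is blocked in t, necessarily by the edge at j, so e(y) cannot also meet e(v)\<close>
        have "\<not> ub t p"
        proof
          assume "ub t p"
          then have "key v < key y" using pr(6)[of p] p(2) t_p by simp
          then show False using p(4) by simp
        qed
        then have "inc (eo y) \<inter> cverts inc (t ! j) \<noteq> {}"
          using blocker_where_differ[OF p(1,3) t_p \<open>y \<noteq> r\<close>] L by simp
        then have "inc (eo y) \<inter> cverts inc (nu ! j) \<noteq> {}" using nu(2) j(3) by simp
        moreover have "nu ! p = Vx y" using nu(3) p(2) t_p by simp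
        ultimately have "inc (eo y) \<inter> cverts inc (nu ! i) = {}"
          using unique_blocker[OF nuD \<open>p < n\<close> _ \<open>y \<noteq> r\<close> pr(4) j(1) j(2)[symmetric]] p(2) False by blast
        then show ?thesis using nu(1) \<open>l = i\<close> j(2) by simp
      qed
    qed
  qed
qed

lemma upper_face_least_key:
  assumes tD: "t \<in> D" and prt: "PR t = Some nu" and i: "least_unblocked t = i" "t ! i = Vx v"
    and j: "j < n" "nu ! j = Ed (eo x)" "x \<in> V" "x \<noteq> r"
    and t': "t' = nu[j := Vx x]" "t' \<noteq> t" "redundant t'"
  shows "key (the_Vx (t' ! least_unblocked t')) < key v"
proof -
  note pr = pr_Some_least[OF tD prt i]
  have L: "length t = n" using DnG_length tD by simp
  have "j \<noteq> i"
  proof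
    assume "j = i"
    then have "x = v" using j(2) pr(2,3,4,5) L j(3,4) inj_on_eroot by (auto dest: inj_onD)
    then show False using t' pr(5) i(2) \<open>j = i\<close> by (metis list_update_id list_update_overwrite)
  qed
  have t_j: "t ! j = Ed (eo x)" using j(2) \<open>j \<noteq> i\<close> unfolding pr(5) by simp
  define d where "d = t[j := Vx x]"
  have dD: "d \<in> D"
    unfolding d_def using DnG_update_subcell[OF tD j(1), of "Vx x"] j(3,4) t_j eroot_incident by auto
  have d_t': "d = t'[i := Vx v]"
    unfolding d_def t'(1) pr(5) using \<open>j \<noteq> i\<close> i(2) by (metis list_update_id list_update_overwrite list_update_swap)
  have ub_d: "ub d i"
  proof (rule unblocked_mono[OF pr(1)])
    show "length d = length t" "d ! i = t ! i" using \<open>j \<noteq> i\<close> unfolding d_def by auto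
    fix l assume "l < length t" "l \<noteq> i"
    then show "cverts inc (d ! l) \<subseteq> cverts inc (t ! l)"
      using t_j eroot_incident[OF j(3,4)] unfolding d_def by (cases "l = j") auto
  qed
  \<comment> \<open>t' is not collapsible, so the least unblocked vertex p of d is not the one at i\<close>
  define p where "p = least_unblocked d"
  have "p \<noteq> i"
  proof
    assume "p = i"
    have "t'[i := Ed (eo v)] = t'" using t'(1) pr(5) \<open>j \<noteq> i\<close> L by (simp add: list_update_swap)
    moreover have "i < length t'" using t'(1) pr(4,5) L by simp
    ultimately have "PR d = Some t'"
      using ub_d \<open>p = i\<close> d_t' i(2) unfolding pr_eq p_def er_def by auto
    then show False using t'(3) dD collapsible_pr unfolding redundant_def by blast
  qed
  have "d ! i = Vx v" using \<open>j \<noteq> i\<close> i(2) unfolding d_def by simp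
  have "\<exists>i. ub d i" using ub_d by blast
  note lu = least_unblocked[OF dD this, folded p_def]
  obtain y where "d ! p = Vx y" using lu(1) by (rule unblockedE)
  then have p: "ub d p" "d ! p = Vx y" "key y < key v"
    using lu(1) lu(2)[OF ub_d \<open>p \<noteq> i\<close>[symmetric]] \<open>d ! i = Vx v\<close> by simp_all
  have ub_t': "ub t' p"
    using unblocked_upper_face[OF tD prt i j(1) \<open>j \<noteq> i\<close> t_j j(3,4)] p \<open>p \<noteq> i\<close> t'(1)
    unfolding d_def by blast
  have t'_p: "t' ! p = Vx y" using p(2) \<open>p \<noteq> i\<close> unfolding d_t' by simp
  have "t' \<in> D" using t'(3) unfolding redundant_def by simp
  moreover have "\<exists>i. ub t' i" using ub_t' by blast
  ultimately have "key (the_Vx (t' ! least_unblocked t')) \<le> key y"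
    using least_unblocked(2)[of t' p] ub_t' t'_p by (cases "least_unblocked t' = p") auto
  then show ?thesis using p(3) by simp
qed

lemma nontree_height_pr:
  assumes "t \<in> D" "PR t = Some nu"
  shows "length (filter nontree_edge nu) = length (filter nontree_edge t)" "Suc (height nu) = height t"
proof -
  obtain i v where i: "least_unblocked t = i" "t ! i = Vx v" by (rule pr_SomeE[OF assms])
  note pr = pr_Some_least[OF assms i]
  have L: "length t = n" using DnG_length assms(1) by simp
  have "eo v \<in> T" using eroot_parent(1)[OF pr(2,3)] .
  then show "length (filter nontree_edge nu) = length (filter nontree_edge t)"
    using length_filter_update[of i t nontree_edge "Ed (eo v)"] pr(4,5) i(2) L
    unfolding nontree_edge_def by simp
  show "Suc (height nu) = height t"
    using sum_list_map_update[of i t cell_height "Ed (eo v)"] pr(4,5) i(2) L cell_height_eroot[OF pr(2,3)]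
    unfolding height_def by simp
qed

lemma nontree_height_vertex_face:
  assumes "j < length nu" "nu ! j = Ed e"
  shows "length (filter nontree_edge (nu[j := Vx x])) + (if e \<notin> T then 1 else 0) = length (filter nontree_edge nu)"
    "height (nu[j := Vx x]) + cell_height (Ed e) = height nu + 2 * depth x"
  using length_filter_update[of j nu nontree_edge "Vx x"] sum_list_map_update[of j nu cell_height "Vx x"] assms
  unfolding nontree_edge_def height_def cell_height_def by simp_all

lemma potential_decreases:
  assumes t: "redundant t" "PR t = Some nu" and t': "imm_face inc t' nu" "t' \<noteq> t" "redundant t'"
  shows "potential t' < potential t"
proof -
  have tD: "t \<in> D" using t(1) unfolding redundant_def by simp
  obtain i v where i: "least_unblocked t = i" "t ! i = Vx v" by (rule pr_SomeE[OF tD t(2)])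
  note pr = pr_Some_least[OF tD t(2) i]
  obtain j e x where j: "j < length nu" "nu ! j = Ed e" "x \<in> inc e" "t' = nu[j := Vx x]"
    using t'(1) unfolding imm_face_def by blast
  have L: "length nu = n" using DnG_length pr_in_DnG[OF tD t(2)] by simp
  note nontree_nu = nontree_height_pr(1)[OF tD t(2)] and height_nu = nontree_height_pr(2)[OF tD t(2)]
  note nontree_t' = nontree_height_vertex_face(1)[OF j(1,2), of x, folded j(4)]
    and height_t' = nontree_height_vertex_face(2)[OF j(1,2), of x, folded j(4)]
  show ?thesis
  proof (cases "e \<in> T")
    case False
    then show ?thesis using nontree_t' nontree_nu unfolding potential_def by simp
  next
    case True
    then obtain y where y: "inc e = {x, y}" "x \<noteq> y"
      "(depth x = Suc (depth y) \<and> x \<noteq> r \<and> eo x = e) \<or> (depth y = Suc (depth x) \<and> y \<noteq> r \<and> eo y = e)"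
      using tree_edge_cases[OF True j(3)] by blast
    have cell_e: "cell_height (Ed e) = depth x + depth y" unfolding cell_height_def using True y(1,2) by simp
    show ?thesis
    proof (cases "depth y = Suc (depth x)")
      case True
      then have "height t' < height t" using height_t' height_nu cell_e by simp
      then show ?thesis using nontree_t' nontree_nu \<open>e \<in> T\<close> unfolding potential_def by simp
    next
      case False
      then have x: "depth x = Suc (depth y)" "x \<noteq> r" "e = eo x" using y(3) by auto
      have "x \<in> V" using inc_edge T_subset_E \<open>e \<in> T\<close> j(3) by blast
      have "key (the_Vx (t' ! least_unblocked t')) < key v"
        using upper_face_least_key[OF tD t(2) i _ _ \<open>x \<in> V\<close> x(2) j(4) t'(2,3)] j(1,2) L x(3) by simp
      moreover have "height t' = height t" using height_t' height_nu cell_e x(1) by simp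
      ultimately show ?thesis
        using nontree_t' nontree_nu \<open>e \<in> T\<close> pr(6) i unfolding potential_def by simp
    qed
  qed
qed

lemma W_acyclic: "\<not> (\<exists>ts. V_path (imm_face inc) Wf ts \<and> length ts \<ge> 2 \<and> hd ts = last ts)"
proof
  assume "\<exists>ts. V_path (imm_face inc) Wf ts \<and> length ts \<ge> 2 \<and> hd ts = last ts"
  then obtain ts where path: "V_path (imm_face inc) Wf ts" and len: "length ts \<ge> 2" and closed: "hd ts = last ts"
    by blast
  have step: "ts ! k \<noteq> ts ! Suc k \<and> (\<exists>\<nu>. (ts ! k, \<nu>) \<in> Wf \<and> imm_face inc (ts ! Suc k) \<nu>)"
    if "Suc k < length ts" for k
    using path that unfolding V_path_def by blast
  have "ts \<noteq> []" using len by auto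
  then have last: "ts ! (length ts - 1) = ts ! 0" using closed by (simp add: hd_conv_nth last_conv_nth)
  have redundant: "redundant (ts ! k)" if "k < length ts" for k
  proof (cases "Suc k < length ts")
    case True
    then show ?thesis using step W_iff by blast
  next
    case False
    then have "k = length ts - 1" using that by simp
    then show ?thesis using last step[of 0] len W_iff by auto
  qed
  have "potential (ts ! Suc k) < potential (ts ! k)" if "Suc k < length ts" for k
    using step[OF that] potential_decreases redundant that W_iff by (metis Suc_lessD)
  then show False using descending_list_not_closed[OF _ len] closed by blast
qed

section \<open>Equivariance and the quotient\<close>

lemma act_in_DnG:
  assumes "s permutes {..<n}" "a \<in> D"
  shows "act a s \<in> D"
proof (rule DnG_I)
  have L: "length a = n" using DnG_length assms(2) by simp
  show "length (act a s) = n" using L by simp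
  show "gcell_in V E (act a s ! i)" if "i < n" for i
    using DnG_cell[OF assms(2), of "s i"] L that permutes_less_iff[OF assms(1)] by simp
  show "cverts inc (act a s ! i) \<inter> cverts inc (act a s ! j) = {}" if "i < n" "j < n" "i \<noteq> j" for i j
    using DnG_disjoint[OF assms(2), of "s i" "s j"] permutes_inj[OF assms(1)] L that
      permutes_less_iff[OF assms(1)] by (simp add: inj_eq)
qed

lemma unblocked_act:
  assumes s: "s permutes {..<n}" and L: "length a = n"
  shows "ub (act a s) i \<longleftrightarrow> ub a (s i)"
proof (cases "i < n")
  case False
  then show ?thesis using permutes_not_in[OF s, of i] L unfolding unblocked_def by simp
next
  case True
  have others: "(\<forall>j<n. j \<noteq> i \<longrightarrow> P (a ! s j)) \<longleftrightarrow> (\<forall>j<n. j \<noteq> s i \<longrightarrow> P (a ! j))" for P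
  proof safe
    fix j assume P: "\<forall>j<n. j \<noteq> i \<longrightarrow> P (a ! s j)" and j: "j < n" "j \<noteq> s i"
    have "inv s j < n" "s (inv s j) = j" using permutes_less_iff[OF permutes_inv[OF s]] j(1)
      permutes_inverses(1)[OF s] by auto
    moreover from this have "inv s j \<noteq> i" using j(2) by auto
    ultimately have "P (a ! s (inv s j))" using P by blast
    then show "P (a ! j)" using \<open>s (inv s j) = j\<close> by simp
  next
    fix j assume P: "\<forall>j<n. j \<noteq> s i \<longrightarrow> P (a ! j)" and j: "j < n" "j \<noteq> i"
    then show "P (a ! s j)" using permutes_less_iff[OF s] permutes_inj[OF s] by (simp add: inj_eq)
  qed
  show ?thesis
    unfolding unblocked_iff length_act L using True permutes_less_iff[OF s] L
      others[of "\<lambda>c. inc (eo (the_Vx (a ! s i))) \<inter> cverts inc c = {}"]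
    by (cases "a ! s i") auto
qed

lemma least_unblocked_act:
  assumes s: "s permutes {..<n}" and aD: "a \<in> D" and ex: "\<exists>i. ub a i"
  shows "least_unblocked (act a s) = inv s (least_unblocked a)"
proof -
  define m where "m = least_unblocked a"
  have L: "length a = n" using DnG_length aD by simp
  note lu = least_unblocked[OF aD ex, folded m_def]
  have m_n: "m < n" using lu(1) L unfolding unblocked_def by simp
  have sm: "s (inv s m) = m" using permutes_inverses(1)[OF s] by simp
  have inv_n: "inv s m < n" using permutes_less_iff[OF permutes_inv[OF s]] m_n by simp
  show ?thesis unfolding m_def[symmetric]
  proof (rule least_unblocked_eqI[OF act_in_DnG[OF s aD]])
    show "ub (act a s) (inv s m)" using unblocked_act[OF s L] sm lu(1) by simp
    fix j assume j: "ub (act a s) j" "j \<noteq> inv s m"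
    have "ub a (s j)" using unblocked_act[OF s L] j(1) by simp
    moreover have "s j \<noteq> m" using j(2) permutes_inv_eq[OF s, of m j] by auto
    moreover have "j < n" using j(1) L unfolding unblocked_def by simp
    ultimately show "key (the_Vx (act a s ! inv s m)) < key (the_Vx (act a s ! j))"
      using lu(2) inv_n sm L by simp
  qed
qed

lemma pr_act:
  assumes s: "s permutes {..<n}" and aD: "a \<in> D"
  shows "PR (act a s) = map_option (\<lambda>c. act c s) (PR a)"
proof -
  have L: "length a = n" using DnG_length aD by simp
  have ex: "(\<exists>i. ub (act a s) i) \<longleftrightarrow> (\<exists>i. ub a i)"
  proof
    assume "\<exists>i. ub a i"
    then obtain i where "ub a i" by blast
    then have "ub (act a s) (inv s i)" using unblocked_act[OF s L] permutes_inverses(1)[OF s] by simp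
    then show "\<exists>i. ub (act a s) i" by blast
  qed (use unblocked_act[OF s L] in blast)
  show ?thesis
  proof (cases "\<exists>i. ub a i")
    case True
    define m where "m = least_unblocked a"
    have m_n: "m < n" using least_unblocked(1)[OF aD True] L unfolding m_def unblocked_def by simp
    have sm: "s (inv s m) = m" using permutes_inverses(1)[OF s] by simp
    have inv_n: "inv s m < n" using permutes_less_iff[OF permutes_inv[OF s]] m_n by simp
    have "er V inc T r (act a s) (inv s m) = act (er V inc T r a m) s"
      unfolding er_def using act_list_update[OF s L inv_n] sm inv_n L by simp
    then show ?thesis
      unfolding pr_eq using ex True least_unblocked_act[OF s aD True] m_def by simp
  qed (use ex in \<open>simp add: pr_eq\<close>)
qed

lemma collapsible_act:
  assumes s: "s permutes {..<n}" and aD: "a \<in> D" and "collapsible a"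
  shows "collapsible (act a s)"
proof -
  obtain b where "b \<in> D" "PR b = Some a" using assms(3) unfolding collapsible_def by blast
  then show ?thesis using collapsible_pr[OF act_in_DnG[OF s]] pr_act[OF s] by simp
qed

lemma redundant_act:
  assumes s: "s permutes {..<n}" and "redundant a"
  shows "redundant (act a s)"
proof -
  have aD: "a \<in> D" using assms(2) unfolding redundant_def by simp
  have "\<not> collapsible (act a s)"
    using collapsible_act[OF permutes_inv[OF s] act_in_DnG[OF s aD]] act_act_inv[OF s DnG_length[OF aD]]
      assms(2) unfolding redundant_def by auto
  then show ?thesis using act_in_DnG[OF s aD] pr_act[OF s aD] assms(2) unfolding redundant_def by simp
qed

lemma cdim_act:
  assumes s: "s permutes {..<n}" and L: "length a = n"
  shows "cdim (act a s) = cdim a"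
proof -
  have "mset (act a s) = mset a" using mset_permute_list s L unfolding act_eq_permute_list by simp
  then show ?thesis unfolding cdim_def by (metis mset_filter size_mset)
qed

lemma W_equivariant:
  assumes "(b, a) \<in> Wf" "s permutes {..<n}"
  shows "(act b s, act a s) \<in> Wf"
  using assms redundant_act pr_act W_iff unfolding redundant_def by auto

lemma W_orbit_pairs:
  assumes ba: "(b, a) \<in> Wf" and ba': "(b', a') \<in> Wf"
    and meet: "{orbit n b, orbit n a} \<inter> {orbit n b', orbit n a'} \<noteq> {}"
  shows "orbit n b = orbit n b' \<and> orbit n a = orbit n a'"
proof -
  have L: "length b = n" "length a = n" "length b' = n" "length a' = n"
    using W_D ba ba' DnG_length by auto
  obtain x y where xy: "x \<in> {b, a}" "y \<in> {b', a'}" "orbit n x = orbit n y" using meet by blast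
  then have "y \<in> orbit n x" using orbit_self[of y n] by simp
  then obtain s where s: "s permutes {..<n}" "y = act x s" unfolding orbit_def by blast
  \<comment> \<open>transporting (b, a) by s gives a pair of W sharing a cell with (b', a'), hence equal to it\<close>
  have "(act b s, act a s) \<in> Wf" using W_equivariant[OF ba s(1)] .
  moreover have "y \<in> {act b s, act a s}" using xy(1) s(2) by auto
  moreover have "{fst p, snd p} \<inter> {fst q, snd q} = {}" if "p \<in> Wf" "q \<in> Wf" "p \<noteq> q" for p q
    using W_discrete_vector_field that unfolding discrete_vector_field_def by blast
  ultimately have "(act b s, act a s) = (b', a')" using ba' xy(2) by fastforce
  then show ?thesis using orbit_eq[OF L(1) orbit_act[OF s(1)]] orbit_eq[OF L(2) orbit_act[OF s(1)]] by auto
qed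

lemma induced_discrete_vector_field: "discrete_vector_field (UDnG n V E inc) (qface inc) (induced_field n Wf)"
  unfolding discrete_vector_field_def
proof (intro conjI ballI impI)
  fix p assume "p \<in> induced_field n Wf"
  then obtain b a where p: "p = (orbit n b, orbit n a)" and ba: "(b, a) \<in> Wf"
    unfolding induced_field_def by blast
  have "orbit n b \<in> UDnG n V E inc" "orbit n a \<in> UDnG n V E inc"
    using W_D[OF ba] unfolding UDnG_def by auto
  moreover have "qface inc (orbit n b) (orbit n a)"
    unfolding qface_def using orbit_self W_face[OF ba] by blast
  ultimately show "case p of (Q1, Q2) \<Rightarrow> Q1 \<in> UDnG n V E inc \<and> Q2 \<in> UDnG n V E inc \<and> qface inc Q1 Q2"
    using p by simp
next
  fix p q assume pq: "p \<in> induced_field n Wf" "q \<in> induced_field n Wf" "p \<noteq> q"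
  obtain b a b' a' where p: "p = (orbit n b, orbit n a)" "(b, a) \<in> Wf"
    and q: "q = (orbit n b', orbit n a')" "(b', a') \<in> Wf"
    using pq(1,2) unfolding induced_field_def by blast
  show "{fst p, snd p} \<inter> {fst q, snd q} = {}"
    using W_orbit_pairs[OF p(2) q(2)] p(1) q(1) pq(3) by auto
qed

lemma orbit_in_W_entries:
  assumes aD: "a \<in> D"
  shows "orbit n a \<in> fst ` induced_field n Wf \<longleftrightarrow> a \<in> fst ` Wf"
    "orbit n a \<in> snd ` induced_field n Wf \<longleftrightarrow> a \<in> snd ` Wf"
proof -
  have in_orbit: "\<exists>s. s permutes {..<n} \<and> a = act x s" if "orbit n a = orbit n x" for x
  proof -
    have "x \<in> orbit n a" unfolding that by (rule orbit_self)
    then obtain s where "s permutes {..<n}" "x = act a s" unfolding orbit_def by blast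
    then show ?thesis using act_act_inv[OF _ DnG_length[OF aD]] permutes_inv by metis
  qed
  show "orbit n a \<in> fst ` induced_field n Wf \<longleftrightarrow> a \<in> fst ` Wf"
  proof
    assume "orbit n a \<in> fst ` induced_field n Wf"
    then obtain b c where bc: "(b, c) \<in> Wf" "orbit n a = orbit n b" unfolding induced_field_def by force
    then obtain s where "s permutes {..<n}" "a = act b s" using in_orbit by blast
    then have "(a, act c s) \<in> Wf" using W_equivariant[OF bc(1)] by simp
    then show "a \<in> fst ` Wf" by force
  next
    assume "a \<in> fst ` Wf"
    then obtain c where "(a, c) \<in> Wf" by force
    then have "(orbit n a, orbit n c) \<in> induced_field n Wf" unfolding induced_field_def by blast
    then show "orbit n a \<in> fst ` induced_field n Wf" by force
  qed
  show "orbit n a \<in> snd ` induced_field n Wf \<longleftrightarrow> a \<in> snd ` Wf"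
  proof
    assume "orbit n a \<in> snd ` induced_field n Wf"
    then obtain b c where bc: "(b, c) \<in> Wf" "orbit n a = orbit n c" unfolding induced_field_def by force
    then obtain s where "s permutes {..<n}" "a = act c s" using in_orbit by blast
    then have "(act b s, a) \<in> Wf" using W_equivariant[OF bc(1)] by simp
    then show "a \<in> snd ` Wf" by force
  next
    assume "a \<in> snd ` Wf"
    then obtain b where "(b, a) \<in> Wf" by force
    then have "(orbit n b, orbit n a) \<in> induced_field n Wf" unfolding induced_field_def by blast
    then show "orbit n a \<in> snd ` induced_field n Wf" by force
  qed
qed

lemma critical_orbit: "a \<in> D \<Longrightarrow> critical (induced_field n Wf) (orbit n a) \<longleftrightarrow> critical Wf a"
  unfolding critical_def using orbit_in_W_entries by simp

lemma DnG_nth_inj: "a \<in> D \<Longrightarrow> i < n \<Longrightarrow> j < n \<Longrightarrow> a ! i = a ! j \<Longrightarrow> i = j"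
proof (rule ccontr)
  assume a: "a \<in> D" "i < n" "j < n" "a ! i = a ! j" "i \<noteq> j"
  have "cverts inc (a ! i) \<noteq> {}" using DnG_cell[OF a(1,2)] by (cases "a ! i") (auto dest: inc_edge)
  then show False using DnG_disjoint[OF a(1,2,3,5)] a(4) by simp
qed

lemma card_orbit:
  assumes aD: "a \<in> D"
  shows "card (orbit n a) = fact n"
proof -
  have L: "length a = n" using DnG_length aD by simp
  have "inj_on (act a) {s. s permutes {..<n}}"
  proof (rule inj_onI)
    fix s t assume s: "s \<in> {s. s permutes {..<n}}" and t: "t \<in> {s. s permutes {..<n}}" and eq: "act a s = act a t"
    show "s = t"
    proof
      fix i show "s i = t i"
      proof (cases "i < n")
        case True
        have "a ! s i = a ! t i" using arg_cong[OF eq, of "\<lambda>x. x ! i"] L True by simp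
        moreover have "s i < n" "t i < n" using permutes_less_iff s t True by auto
        ultimately show ?thesis using DnG_nth_inj[OF aD] by blast
      next
        case False
        then show ?thesis using permutes_not_in[of s "{..<n}" i] permutes_not_in[of t "{..<n}" i] s t by simp
      qed
    qed
  qed
  moreover have "orbit n a = act a ` {s. s permutes {..<n}}" unfolding orbit_def by blast
  ultimately have "card (orbit n a) = card {s. s permutes {..<n}}" by (simp add: card_image)
  then show ?thesis using card_permutations[of "{..<n}" n] by simp
qed

lemma finite_DnG: "finite D"
proof (rule finite_subset)
  show "D \<subseteq> {xs. set xs \<subseteq> Vx ` V \<union> Ed ` E \<and> length xs = n}"
  proof
    fix a assume aD: "a \<in> D"
    have "gcell_in V E c" if "c \<in> set a" for c
      using that DnG_cell[OF aD] DnG_length[OF aD] by (auto simp: in_set_conv_nth)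
    moreover have "c \<in> Vx ` V \<union> Ed ` E" if "gcell_in V E c" for c using that by (cases c) auto
    ultimately have "set a \<subseteq> Vx ` V \<union> Ed ` E" by blast
    then show "a \<in> {xs. set xs \<subseteq> Vx ` V \<union> Ed ` E \<and> length xs = n}" using DnG_length[OF aD] by simp
  qed
  show "finite {xs. set xs \<subseteq> Vx ` V \<union> Ed ` E \<and> length xs = n}"
    by (rule finite_lists_length_eq) (use finite_V finite_E in simp)
qed

lemma card_critical:
  "card {a \<in> D. cdim a = k \<and> critical Wf a}
     = fact n * card {Q \<in> UDnG n V E inc. (\<exists>a\<in>Q. cdim a = k) \<and> critical (induced_field n Wf) Q}"
proof -
  let ?C = "{a \<in> D. cdim a = k \<and> critical Wf a}"
  let ?Q = "{Q \<in> UDnG n V E inc. (\<exists>a\<in>Q. cdim a = k) \<and> critical (induced_field n Wf) Q}"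
  have orbit_cdim: "cdim x = cdim a" if "a \<in> D" "x \<in> orbit n a" for a x
    using that cdim_act DnG_length unfolding orbit_def by auto
  have orbit_D: "x \<in> D" if "a \<in> D" "x \<in> orbit n a" for a x
    using that act_in_DnG unfolding orbit_def by auto
  \<comment> \<open>the critical cells of dimension k are the disjoint union of the critical orbits\<close>
  have "\<Union>?Q = ?C"
  proof
    show "\<Union>?Q \<subseteq> ?C"
    proof
      fix x assume "x \<in> \<Union>?Q"
      then obtain a y where a: "a \<in> D" "x \<in> orbit n a" "y \<in> orbit n a" "cdim y = k"
        "critical (induced_field n Wf) (orbit n a)"
        unfolding UDnG_def by auto
      have xD: "x \<in> D" using orbit_D a(1,2) .
      moreover have "cdim x = k" using orbit_cdim[OF a(1)] a(2-4) by simp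
      moreover have "orbit n x = orbit n a" using orbit_eq[OF DnG_length[OF a(1)] a(2)] .
      ultimately show "x \<in> ?C" using critical_orbit[OF xD] a(5) by simp
    qed
    show "?C \<subseteq> \<Union>?Q" using critical_orbit orbit_self unfolding UDnG_def by blast
  qed
  moreover have "finite ?Q" using finite_DnG unfolding UDnG_def by simp
  moreover have "card Q = fact n" if "Q \<in> ?Q" for Q using that card_orbit unfolding UDnG_def by auto
  moreover have "Q1 \<inter> Q2 = {}" if "Q1 \<in> ?Q" "Q2 \<in> ?Q" "Q1 \<noteq> Q2" for Q1 Q2
    using that orbit_eq[OF DnG_length] unfolding UDnG_def by blast
  moreover have "finite (\<Union>?Q)" using finite_DnG \<open>\<Union>?Q = ?C\<close> by simp
  ultimately show ?thesis using card_partition[of ?Q "fact n"] by simp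
qed

end

theorem corollary3p5:
  fixes V :: "'v set" and E :: "'e set" and inc :: "'e \<Rightarrow> 'v set"
    and T :: "'e set" and r :: 'v and num :: "'v \<Rightarrow> 'e \<Rightarrow> nat" and n :: nat
  assumes n1: "n \<ge> 1"
    and graph: "finite_graph V E inc"
    and subdiv: "sufficiently_subdivided n V E inc"
    and tree: "spanning_tree V E inc T"
    and root: "r \<in> V" "card {e \<in> T. r \<in> inc e} = 1"
    and numbering: "edge_numbering V E inc T r num"
  shows "gradient_vector_field (DnG n V E inc) (imm_face inc) (W n V E inc T r num)
    \<and> (\<forall>b a \<sigma>. (b, a) \<in> W n V E inc T r num \<and> \<sigma> permutes {..<n}
          \<longrightarrow> (act b \<sigma>, act a \<sigma>) \<in> W n V E inc T r num)
    \<and> discrete_vector_field (UDnG n V E inc) (qface inc) (induced_field n (W n V E inc T r num))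
    \<and> (\<forall>k. card {a \<in> DnG n V E inc. cdim a = k \<and> critical (W n V E inc T r num) a}
           = fact n * card {Q \<in> UDnG n V E inc. (\<exists>a\<in>Q. cdim a = k)
                \<and> critical (induced_field n (W n V E inc T r num)) Q})"
proof -
  interpret configuration_space V E inc T r num n
    by unfold_locales (use graph tree root numbering in auto)
  have "gradient_vector_field D (imm_face inc) Wf"
    unfolding gradient_vector_field_def using W_discrete_vector_field W_acyclic by blast
  then show ?thesis using W_equivariant induced_discrete_vector_field card_critical by blast
qed

end
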